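(* Let $q\in[0,1)$ and let $T(z)=\sum_{k=0}^\infty T_kz^k$ be a $\mathbb C^{n\times m}$-valued power series converging in a neighbourhood of the origin. The following are equivalent: (1) there exist $N\in\mathbb N_0$ and $(C,A,B)\in\mathbb C^{n\times N}\times\mathbb C^{N\times N}\times\mathbb C^{N\times m}$ with $T(z)=C\prod_{j=0}^\infty(I_N-(1-q)zq^jA)^{-1}B$ near the origin; (2) the block Hankel matrix $H=\bigl([i+j]_q!\,T_{i+j}\bigr)_{i,j=0}^\infty$ has finite rank; (3) there exist $N\in\mathbb N_0$ and $(C,A,B)$ as in (1) with $T_k=\frac{CA^kB}{[k]_q!}$ for all $k\ge0$; (4) the linear span of the columns of the functions $R_q^kT$, $k=0,1,2,\ldots$, is finite dimensional.
   Context: $[0]_q=1$, $[k]_q=1+q+\cdots+q^{k-1}$ ($k\ge1$), $[k]_q!=\prod_{j=1}^k[j]_q$, $[0]_q!=1$; convention $q^0=1$. For $q\in(0,1)$, $(R_qf)(z)=\frac{f(z)-f(qz)}{(1-q)z}$; $R_0$ is the backward shift $(R_0f)(z)=\frac{f(z)-f(0)}{z}$, $(R_0f)(0)=f'(0)$; applied entrywise. *)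

theory Defs
  imports "HOL-Analysis.Analysis" "Jordan_Normal_Form.Matrix"
begin

text \<open>q-integers and q-factorials; note 0 ^ 0 = 1, matching the convention q^0 = 1.\<close>
definition qint :: "real \<Rightarrow> nat \<Rightarrow> real" where
  "qint q k = (\<Sum>i<k. q ^ i)"

definition qfact :: "real \<Rightarrow> nat \<Rightarrow> real" where
  "qfact q k = (\<Prod>j\<in>{1..k}. qint q j)"

definition minv :: "complex mat \<Rightarrow> complex mat" where
  "minv A = (SOME B. inverts_mat A B \<and> inverts_mat B A)"

definition Tser :: "nat \<Rightarrow> nat \<Rightarrow> (nat \<Rightarrow> complex mat) \<Rightarrow> complex \<Rightarrow> complex mat" where
  "Tser n m T z = mat n m (\<lambda>(i,j). \<Sum>k. T k $$ (i,j) * z ^ k)"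

fun qprod_part :: "real \<Rightarrow> complex mat \<Rightarrow> complex \<Rightarrow> nat \<Rightarrow> complex mat" where
  "qprod_part q A z 0 = 1\<^sub>m (dim_row A)"
| "qprod_part q A z (Suc J) = qprod_part q A z J *
     minv (1\<^sub>m (dim_row A) - (complex_of_real ((1 - q) * q ^ J) * z) \<cdot>\<^sub>m A)"

text \<open>The operator R_q on scalar functions (q = 0: backward shift); at z = 0 the value is f'(0).\<close>
definition Rq :: "real \<Rightarrow> (complex \<Rightarrow> complex) \<Rightarrow> complex \<Rightarrow> complex" where
  "Rq q f z = (if z = 0 then deriv f 0
               else (f z - f (complex_of_real q * z)) / (complex_of_real (1 - q) * z))"

definition RqM :: "real \<Rightarrow> nat \<Rightarrow> nat \<Rightarrow> (complex \<Rightarrow> complex mat) \<Rightarrow> complex \<Rightarrow> complex mat" where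
  "RqM q n m F = (\<lambda>z. mat n m (\<lambda>(i,j). Rq q (\<lambda>w. F w $$ (i,j)) z))"

definition fin_dim_span :: "('a \<Rightarrow> complex) set \<Rightarrow> bool" where
  "fin_dim_span S \<longleftrightarrow> (\<exists>F. finite F \<and> (\<forall>v\<in>S. \<exists>c. v = (\<lambda>x. \<Sum>f\<in>F. c f * f x)))"

end

theory Submission
  imports Defs "HOL-Library.Function_Algebras"
begin

text \<open>
  Let h(j, b) denote column (j, b) of the block Hankel matrix, with rows indexed by (i, a).
  Shifting the column index is shifting the row index, h(j+1, b)(i, a) = h(j, b)(i+1, a). So if the
  columns span a finite-dimensional space, writing the shifted basis columns and the columns h(0, b)
  in a basis of columns gives matrices A, B such that h(j, b) has coordinates A^j B; row i = 0 then
  yields C with [k]_q! T_k = C A^k B. Conversely such a realization factors the Hankel matrix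
  through C^N.

  R_q acts on Taylor coefficients by c_i \<mapsto> [i+1]_q c_{i+1}, so the i-th coefficient of R_q^k T
  is the Hankel entry in row i and column k divided by [i]_q!. By uniqueness of power series the
  columns of the iterates R_q^k T satisfy exactly the linear relations of the Hankel columns.

  Finally, the matrix q-exponential E(z) = \<Sum>_k z^k A^k / [k]_q! satisfies
  (I - (1 - q) z A) E(z) = E(q z). Hence the partial products of the infinite product are
  E(z) E(q^J z)^{-1}, which tend to E(z) since E(q^J z) \<rightarrow> I; so the product representation
  says T(z) = C E(z) B near 0, which is the moment representation coefficientwise.
\<close>

section \<open>Finite-dimensional spans of families of functions\<close>

lemma sum_fun_apply: "(\<Sum>v\<in>F. (g v :: 'a \<Rightarrow> 'b::comm_monoid_add)) x = (\<Sum>v\<in>F. g v x)"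
  by (induction F rule: infinite_finite_induct) auto

interpretation cfun: vector_space "(\<lambda>c (f::'a \<Rightarrow> complex) x. c * f x)"
  by unfold_locales (auto simp: algebra_simps plus_fun_def)

lemma cfun_sum_eq: "(\<Sum>v\<in>F. (\<lambda>x. u v * v x)) = (\<lambda>x. \<Sum>v\<in>F. u v * (v::'a \<Rightarrow> complex) x)"
  by (rule ext) (simp add: sum_fun_apply)

lemma fin_dim_span_iff_subset_span: "fin_dim_span S \<longleftrightarrow> (\<exists>F. finite F \<and> S \<subseteq> cfun.span F)"
proof
  assume "fin_dim_span S"
  then obtain F where F: "finite F" "\<forall>v\<in>S. \<exists>c. v = (\<lambda>x. \<Sum>f\<in>F. c f * f x)"
    unfolding fin_dim_span_def by blast
  have "S \<subseteq> cfun.span F"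
  proof
    fix v assume "v \<in> S"
    then obtain c where "v = (\<lambda>x. \<Sum>f\<in>F. c f * f x)" using F by blast
    then show "v \<in> cfun.span F" using F(1) by (simp add: cfun.span_finite cfun_sum_eq)
  qed
  then show "\<exists>F. finite F \<and> S \<subseteq> cfun.span F" using F by blast
next
  assume "\<exists>F. finite F \<and> S \<subseteq> cfun.span F"
  then obtain F where F: "finite F" "S \<subseteq> cfun.span F" by blast
  have "\<forall>v\<in>S. \<exists>c. v = (\<lambda>x. \<Sum>f\<in>F. c f * f x)"
  proof
    fix v assume "v \<in> S"
    then have "v \<in> range (\<lambda>u. \<Sum>v\<in>F. (\<lambda>x. u v * v x))"
      using F cfun.span_finite[OF F(1)] by auto
    then show "\<exists>c. v = (\<lambda>x. \<Sum>f\<in>F. c f * f x)" by (auto simp: cfun_sum_eq)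
  qed
  then show "fin_dim_span S" unfolding fin_dim_span_def using F by blast
qed

lemma fin_dim_spanI:
  fixes g :: "'i \<Rightarrow> 'a \<Rightarrow> complex"
  assumes "finite J" "\<forall>v\<in>S. \<exists>c. v = (\<lambda>x. \<Sum>p\<in>J. c p * g p x)"
  shows "fin_dim_span S"
  unfolding fin_dim_span_iff_subset_span
proof (intro exI conjI)
  show "finite (g ` J)" using assms by simp
  show "S \<subseteq> cfun.span (g ` J)"
  proof
    fix v assume "v \<in> S"
    then obtain c where v: "v = (\<lambda>x. \<Sum>p\<in>J. c p * g p x)" using assms by blast
    have "v = (\<Sum>p\<in>J. (\<lambda>x. c p * g p x))" unfolding v by (rule ext) (simp add: sum_fun_apply)
    also have "\<dots> \<in> cfun.span (g ` J)"
      by (intro cfun.span_sum cfun.span_scale cfun.span_base) auto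
    finally show "v \<in> cfun.span (g ` J)" .
  qed
qed

lemma fin_dim_span_spanning_subfamily:
  fixes u :: "'i \<Rightarrow> 'a \<Rightarrow> complex"
  assumes "fin_dim_span (u ` I)"
  shows "\<exists>J. finite J \<and> J \<subseteq> I \<and> (\<forall>i\<in>I. \<exists>c. u i = (\<lambda>x. \<Sum>l\<in>J. c l * u l x))"
proof -
  obtain F where F: "finite F" "u ` I \<subseteq> cfun.span F" using assms unfolding fin_dim_span_iff_subset_span by blast
  obtain B where B: "B \<subseteq> u ` I" "cfun.independent B" "u ` I \<subseteq> cfun.span B"
    using cfun.maximal_independent_subset by blast
  have fB: "finite B" using cfun.independent_span_bound[OF F(1) B(2)] B(1) F(2) by blast
  define sel where "sel b = (SOME i. i \<in> I \<and> u i = b)" for b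
  have sel: "sel b \<in> I \<and> u (sel b) = b" if "b \<in> B" for b
    unfolding sel_def by (rule someI_ex) (use that B(1) in auto)
  define J where "J = sel ` B"
  have uJ: "u ` J = B" unfolding J_def using sel by force
  have inj: "inj_on u J" unfolding J_def inj_on_def using sel by force
  have fJ: "finite J" unfolding J_def using fB by simp
  have JI: "J \<subseteq> I" unfolding J_def using sel by auto
  have "\<forall>i\<in>I. \<exists>c. u i = (\<lambda>x. \<Sum>l\<in>J. c l * u l x)"
  proof
    fix i assume "i \<in> I"
    then have "u i \<in> cfun.span B" using B by auto
    then obtain w where w: "u i = (\<Sum>v\<in>B. (\<lambda>x. w v * v x))"
      using cfun.span_finite[OF fB] by auto
    have "u i = (\<lambda>x. \<Sum>v\<in>B. w v * v x)" using w by (simp add: cfun_sum_eq)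
    also have "\<dots> = (\<lambda>x. \<Sum>l\<in>J. w (u l) * u l x)"
      unfolding uJ[symmetric] by (subst sum.reindex[OF inj]) auto
    finally show "\<exists>c. u i = (\<lambda>x. \<Sum>l\<in>J. c l * u l x)" by (rule exI[of _ "\<lambda>l. w (u l)"])
  qed
  then show ?thesis using fJ JI by blast
qed

lemma fin_dim_span_transfer:
  fixes u :: "'i \<Rightarrow> 'a \<Rightarrow> complex" and w :: "'i \<Rightarrow> 'b \<Rightarrow> complex"
  assumes "fin_dim_span (u ` I)"
    and "\<And>J c i. finite J \<Longrightarrow> J \<subseteq> I \<Longrightarrow> i \<in> I \<Longrightarrow> u i = (\<lambda>x. \<Sum>l\<in>J. c l * u l x)
           \<Longrightarrow> w i = (\<lambda>y. \<Sum>l\<in>J. c l * w l y)"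
  shows "fin_dim_span (w ` I)"
proof -
  obtain J where J: "finite J" "J \<subseteq> I" "\<forall>i\<in>I. \<exists>c. u i = (\<lambda>x. \<Sum>l\<in>J. c l * u l x)"
    using fin_dim_span_spanning_subfamily[OF assms(1)] by blast
  show ?thesis
  proof (rule fin_dim_spanI[OF J(1), of _ w], intro ballI)
    fix v assume "v \<in> w ` I"
    then obtain i where i: "i \<in> I" "v = w i" by blast
    then obtain c where "u i = (\<lambda>x. \<Sum>l\<in>J. c l * u l x)" using J by blast
    then have "w i = (\<lambda>y. \<Sum>l\<in>J. c l * w l y)" using assms(2) J i by blast
    then show "\<exists>c. v = (\<lambda>x. \<Sum>p\<in>J. c p * w p x)" using i by blast
  qed
qed

lemma qint_ge_1: assumes "0 \<le> q" "1 \<le> k" shows "1 \<le> qint q k"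
proof -
  have "q ^ 0 \<le> (\<Sum>i<k. q ^ i)" by (rule member_le_sum) (use assms in auto)
  then show ?thesis by (simp add: qint_def)
qed

lemma qint_nonneg: "0 \<le> q \<Longrightarrow> 0 \<le> qint q k"
  by (simp add: qint_def sum_nonneg)

lemma qint_le_of_nat: assumes "0 \<le> q" "q \<le> 1" shows "qint q k \<le> real k"
proof -
  have "(\<Sum>i<k. q ^ i) \<le> (\<Sum>i<k. 1)" by (rule sum_mono) (use assms in \<open>auto intro: power_le_one\<close>)
  then show ?thesis by (simp add: qint_def)
qed

lemma one_minus_q_mult_qint: "(1 - q) * qint q k = 1 - q ^ k"
  by (simp add: qint_def one_diff_power_eq)

lemma qfact_Suc: "qfact q (Suc k) = qfact q k * qint q (Suc k)"
  by (simp add: qfact_def)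

lemma qfact_0[simp]: "qfact q 0 = 1"
  by (simp add: qfact_def)

lemma qfact_ge_1: "0 \<le> q \<Longrightarrow> 1 \<le> qfact q k"
proof (induction k)
  case (Suc k)
  have "1 \<le> qint q (Suc k)" using Suc by (intro qint_ge_1) auto
  then show ?case using Suc by (simp add: qfact_Suc) (metis mult_mono' mult.right_neutral zero_le_one)
qed simp

lemma qfact_pos: "0 \<le> q \<Longrightarrow> 0 < qfact q k"
  using qfact_ge_1[of q k] by linarith

lemma index_mult_mat_sum:
  assumes "X \<in> carrier_mat a b" "Y \<in> carrier_mat b c" "i < a" "j < c"
  shows "(X * Y) $$ (i,j) = (\<Sum>k<b. X $$ (i,k) * Y $$ (k,j))"
  using assms by (simp add: scalar_prod_def atLeast0LessThan)

lemma sum_index_mult_mat_left: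
  fixes A Y :: "'a :: comm_semiring_0 mat"
  assumes A: "A \<in> carrier_mat N N" and Y: "Y \<in> carrier_mat N m" and b: "b < m"
  shows "(\<Sum>p<N. (A * Y) $$ (p,b) * f p) = (\<Sum>l<N. Y $$ (l,b) * (\<Sum>p<N. A $$ (p,l) * f p))"
proof -
  have "(\<Sum>p<N. (A * Y) $$ (p,b) * f p) = (\<Sum>p<N. (\<Sum>l<N. A $$ (p,l) * Y $$ (l,b)) * f p)"
    by (intro sum.cong refl) (simp add: index_mult_mat_sum[OF A Y _ b])
  also have "\<dots> = (\<Sum>p<N. \<Sum>l<N. A $$ (p,l) * Y $$ (l,b) * f p)"
    by (simp add: sum_distrib_right)
  also have "\<dots> = (\<Sum>l<N. \<Sum>p<N. A $$ (p,l) * Y $$ (l,b) * f p)"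
    by (rule sum.swap)
  also have "\<dots> = (\<Sum>l<N. Y $$ (l,b) * (\<Sum>p<N. A $$ (p,l) * f p))"
    by (auto simp: sum_distrib_left mult_ac intro!: sum.cong)
  finally show ?thesis .
qed

lemma pow_mat_Suc_left:
  assumes "A \<in> carrier_mat N N" shows "A * A ^\<^sub>m k = A ^\<^sub>m Suc k"
proof (induction k)
  case 0 then show ?case using assms by simp
next
  case (Suc k)
  have "A * A ^\<^sub>m Suc k = (A * A ^\<^sub>m k) * A" using assms by (simp add: assoc_mult_mat[of _ N N _ N _ N])
  also have "\<dots> = A ^\<^sub>m Suc (Suc k)" using Suc by simp
  finally show ?case .
qed

lemma pow_mat_add:
  assumes "A \<in> carrier_mat N N" shows "A ^\<^sub>m (i + j) = A ^\<^sub>m i * A ^\<^sub>m j"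
proof (induction j)
  case 0 then show ?case using assms by simp
next
  case (Suc j)
  have "A ^\<^sub>m (i + Suc j) = A ^\<^sub>m (i + j) * A" by simp
  also have "\<dots> = A ^\<^sub>m i * A ^\<^sub>m j * A" using Suc by simp
  also have "\<dots> = A ^\<^sub>m i * A ^\<^sub>m Suc j" using assms by (simp add: assoc_mult_mat[of _ N N _ N _ N])
  finally show ?case .
qed

lemma mult_pow_mat_add_mult:
  assumes C: "C \<in> carrier_mat n N" and A: "A \<in> carrier_mat N N" and B: "B \<in> carrier_mat N m"
  shows "C * A ^\<^sub>m (i + j) * B = (C * A ^\<^sub>m i) * (A ^\<^sub>m j * B)"
proof -
  have Ai: "A ^\<^sub>m i \<in> carrier_mat N N" and Aj: "A ^\<^sub>m j \<in> carrier_mat N N" using A by auto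
  have "C * A ^\<^sub>m (i + j) = C * A ^\<^sub>m i * A ^\<^sub>m j"
    using assoc_mult_mat[OF C Ai Aj] by (simp add: pow_mat_add[OF A])
  then show ?thesis using assoc_mult_mat[OF mult_carrier_mat[OF C Ai] Aj B] by simp
qed

lemma smult_smult_mat: "a \<cdot>\<^sub>m (b \<cdot>\<^sub>m X) = (a * b :: 'a :: semigroup_mult) \<cdot>\<^sub>m X"
  by (rule eq_matI) (auto simp: mult.assoc)

section \<open>Realization of shift-invariant families\<close>

lemma fin_dim_shift_invariant_realization:
  fixes h :: "nat \<times> nat \<Rightarrow> 'x \<Rightarrow> complex"
  assumes shift: "\<And>j b x. h (Suc j, b) x = h (j, b) (\<sigma> x)"
    and fd: "fin_dim_span (h ` (UNIV \<times> {..<m}))"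
  shows "\<exists>N A B g. A \<in> carrier_mat N N \<and> B \<in> carrier_mat N m \<and>
           (\<forall>j b x. b < m \<longrightarrow> h (j,b) x = (\<Sum>p<N. (A ^\<^sub>m j * B) $$ (p,b) * g p x))"
proof -
  define I where "I = (UNIV \<times> {..<m} :: (nat \<times> nat) set)"
  obtain J where J: "finite J" "J \<subseteq> I" and rep: "\<forall>i\<in>I. \<exists>c. h i = (\<lambda>x. \<Sum>l\<in>J. c l * h l x)"
    using fin_dim_span_spanning_subfamily[OF fd] unfolding I_def by blast
  obtain c where c: "\<And>i. i \<in> I \<Longrightarrow> h i = (\<lambda>x. \<Sum>l\<in>J. c i l * h l x)"
    using bchoice[OF rep] by blast
  define N where "N = card J"
  obtain e where e: "bij_betw e {..<N} J"
    using ex_bij_betw_nat_finite[OF J(1)] unfolding N_def atLeast0LessThan by blast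
  have sum_J: "(\<Sum>l\<in>J. f l) = (\<Sum>p<N. f (e p))" for f :: "nat \<times> nat \<Rightarrow> complex"
    using sum.reindex_bij_betw[OF e, of f] by simp
  have eI: "e p \<in> I" if "p < N" for p using e J(2) that bij_betwE by blast
  define A where "A = mat N N (\<lambda>(p,l). c (Suc (fst (e l)), snd (e l)) (e p))"
  define B where "B = mat N m (\<lambda>(p,b). c (0,b) (e p))"
  define g where "g p = h (e p)" for p
  have A: "A \<in> carrier_mat N N" and B: "B \<in> carrier_mat N m" unfolding A_def B_def by auto
  have shift_basis: "h (e l) (\<sigma> x) = (\<Sum>p<N. A $$ (p,l) * g p x)" if "l < N" for l x
  proof -
    define i where "i = (Suc (fst (e l)), snd (e l))"
    have "i \<in> I" using eI[OF that] unfolding I_def i_def by auto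
    have "h (e l) (\<sigma> x) = h i x"
      using shift[of "fst (e l)" "snd (e l)" x] by (simp add: i_def)
    also have "\<dots> = (\<Sum>p<N. c i (e p) * h (e p) x)"
      using fun_cong[OF c[OF \<open>i \<in> I\<close>], of x] by (simp only: sum_J)
    also have "\<dots> = (\<Sum>p<N. A $$ (p,l) * g p x)"
      using that by (intro sum.cong) (simp_all add: A_def g_def i_def)
    finally show ?thesis .
  qed
  have "h (j,b) x = (\<Sum>p<N. (A ^\<^sub>m j * B) $$ (p,b) * g p x)" if b: "b < m" for j b x
  proof (induction j arbitrary: x)
    case 0
    have "(0,b) \<in> I" using b unfolding I_def by auto
    from c[OF this] show ?case using A B b by (simp add: sum_J B_def g_def)
  next
    case (Suc j)
    have A_pow_Suc: "A * (A ^\<^sub>m j * B) = A ^\<^sub>m Suc j * B"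
      using assoc_mult_mat[OF A pow_carrier_mat[OF A] B] by (simp add: pow_mat_Suc_left[OF A])
    have "h (Suc j, b) x = (\<Sum>l<N. (A ^\<^sub>m j * B) $$ (l,b) * h (e l) (\<sigma> x))"
      using shift Suc.IH by (simp add: g_def)
    also have "\<dots> = (\<Sum>l<N. (A ^\<^sub>m j * B) $$ (l,b) * (\<Sum>p<N. A $$ (p,l) * g p x))"
      by (intro sum.cong) (simp_all add: shift_basis)
    also have "\<dots> = (\<Sum>p<N. (A ^\<^sub>m Suc j * B) $$ (p,b) * g p x)"
      unfolding A_pow_Suc[symmetric] using A B b by (intro sum_index_mult_mat_left[symmetric]) auto
    finally show ?case .
  qed
  then show ?thesis using A B by blast
qed

section \<open>The block Hankel matrix\<close>

definition hankel_col :: "real \<Rightarrow> nat \<Rightarrow> (nat \<Rightarrow> complex mat) \<Rightarrow> nat \<times> nat \<Rightarrow> nat \<times> nat \<Rightarrow> complex" where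
  "hankel_col q n T = (\<lambda>(j,b). (\<lambda>(i,a). if a < n then complex_of_real (qfact q (i+j)) * T (i+j) $$ (a,b) else 0))"

lemma hankel_col_Suc: "hankel_col q n T (Suc j, b) (i, a) = hankel_col q n T (j, b) (Suc i, a)"
  by (simp add: hankel_col_def)

lemma hankel_col_moments:
  assumes q: "0 \<le> q" and C: "C \<in> carrier_mat n N" and A: "A \<in> carrier_mat N N"
    and B: "B \<in> carrier_mat N m" and b: "b < m"
    and T: "\<And>k. T k = complex_of_real (1 / qfact q k) \<cdot>\<^sub>m (C * A ^\<^sub>m k * B)"
  shows "hankel_col q n T (j,b) (i,a) =
           (\<Sum>p<N. (A ^\<^sub>m j * B) $$ (p,b) * (if a < n then (C * A ^\<^sub>m i) $$ (a,p) else 0))"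
proof (cases "a < n")
  case True
  have "(C * A ^\<^sub>m (i+j) * B) $$ (a,b) = (\<Sum>p<N. (C * A ^\<^sub>m i) $$ (a,p) * (A ^\<^sub>m j * B) $$ (p,b))"
    unfolding mult_pow_mat_add_mult[OF C A B] using C A B True b by (intro index_mult_mat_sum) auto
  moreover have "complex_of_real (qfact q (i+j)) \<noteq> 0" using qfact_pos[OF q, of "i+j"] by simp
  ultimately show ?thesis
    using True b C B by (simp add: hankel_col_def T mult.commute)
qed (simp add: hankel_col_def)

lemma fin_dim_hankel_if_moments:
  assumes q: "0 \<le> q"
    and C: "C \<in> carrier_mat n N" and A: "A \<in> carrier_mat N N" and B: "B \<in> carrier_mat N m"
    and T: "\<And>k. T k = complex_of_real (1 / qfact q k) \<cdot>\<^sub>m (C * A ^\<^sub>m k * B)"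
  shows "fin_dim_span (hankel_col q n T ` (UNIV \<times> {..<m}))"
proof (rule fin_dim_spanI[of "{..<N}" _ "\<lambda>p (i,a). if a < n then (C * A ^\<^sub>m i) $$ (a,p) else 0"],
       simp, intro ballI)
  fix v assume "v \<in> hankel_col q n T ` (UNIV \<times> {..<m})"
  then obtain j b where v: "v = hankel_col q n T (j,b)" and b: "b < m" by auto
  show "\<exists>c. v = (\<lambda>x. \<Sum>p\<in>{..<N}. c p * (case x of (i,a) \<Rightarrow> if a < n then (C * A ^\<^sub>m i) $$ (a,p) else 0))"
    by (rule exI[of _ "\<lambda>p. (A ^\<^sub>m j * B) $$ (p,b)"])
       (auto simp: v hankel_col_moments[OF q C A B b T])
qed

lemma moments_if_fin_dim_hankel:
  assumes q: "0 \<le> q" and dims: "\<And>k. T k \<in> carrier_mat n m"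
    and fd: "fin_dim_span (hankel_col q n T ` (UNIV \<times> {..<m}))"
  shows "\<exists>N C A B. C \<in> carrier_mat n N \<and> A \<in> carrier_mat N N \<and> B \<in> carrier_mat N m \<and>
              (\<forall>k. T k = complex_of_real (1 / qfact q k) \<cdot>\<^sub>m (C * A ^\<^sub>m k * B))"
proof -
  have "hankel_col q n T (Suc j, b) x = hankel_col q n T (j, b) ((\<lambda>(i,a). (Suc i, a)) x)" for j b x
    by (cases x) (simp add: hankel_col_Suc)
  from fin_dim_shift_invariant_realization[OF this fd]
  obtain N A B g where A: "A \<in> carrier_mat N N" and B: "B \<in> carrier_mat N m"
    and h: "\<forall>j b x. b < m \<longrightarrow> hankel_col q n T (j,b) x = (\<Sum>p<N. (A ^\<^sub>m j * B) $$ (p,b) * g p x)"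
    by blast
  define C where "C = mat n N (\<lambda>(a,p). g p (0,a))"
  have C: "C \<in> carrier_mat n N" unfolding C_def by auto
  have "T k = complex_of_real (1 / qfact q k) \<cdot>\<^sub>m (C * A ^\<^sub>m k * B)" for k
  proof (rule eq_matI)
    fix a b assume "a < dim_row (complex_of_real (1 / qfact q k) \<cdot>\<^sub>m (C * A ^\<^sub>m k * B))"
      "b < dim_col (complex_of_real (1 / qfact q k) \<cdot>\<^sub>m (C * A ^\<^sub>m k * B))"
    then have a: "a < n" and b: "b < m" using C B by auto
    have "complex_of_real (qfact q k) * T k $$ (a,b) = hankel_col q n T (k,b) (0,a)"
      using a by (simp add: hankel_col_def)
    also have "\<dots> = (\<Sum>p<N. (A ^\<^sub>m k * B) $$ (p,b) * g p (0,a))"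
      using h b by blast
    also have "\<dots> = (\<Sum>p<N. C $$ (a,p) * (A ^\<^sub>m k * B) $$ (p,b))"
      using a by (intro sum.cong) (auto simp: C_def)
    also have "\<dots> = (C * (A ^\<^sub>m k * B)) $$ (a,b)"
      using A B C a b by (intro index_mult_mat_sum[symmetric]) auto
    also have "\<dots> = (C * A ^\<^sub>m k * B) $$ (a,b)"
      using assoc_mult_mat[OF C pow_carrier_mat[OF A] B] by simp
    finally have "complex_of_real (qfact q k) * T k $$ (a,b) = (C * A ^\<^sub>m k * B) $$ (a,b)" .
    moreover have "complex_of_real (qfact q k) \<noteq> 0" using qfact_pos[OF q, of k] by simp
    ultimately have "T k $$ (a,b) = (C * A ^\<^sub>m k * B) $$ (a,b) / complex_of_real (qfact q k)"
      by (simp add: eq_divide_eq mult.commute)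
    then show "T k $$ (a,b) = (complex_of_real (1 / qfact q k) \<cdot>\<^sub>m (C * A ^\<^sub>m k * B)) $$ (a,b)"
      using a b C B by simp
  qed (use dims[of k] C B in auto)
  then show ?thesis using A B C by blast
qed

lemma fin_dim_hankel_iff_moments:
  assumes q: "0 \<le> q" and dims: "\<And>k. T k \<in> carrier_mat n m"
  shows "fin_dim_span (hankel_col q n T ` (UNIV \<times> {..<m})) \<longleftrightarrow>
           (\<exists>N C A B. C \<in> carrier_mat n N \<and> A \<in> carrier_mat N N \<and> B \<in> carrier_mat N m \<and>
              (\<forall>k. T k = complex_of_real (1 / qfact q k) \<cdot>\<^sub>m (C * A ^\<^sub>m k * B)))"
proof
  assume "\<exists>N C A B. C \<in> carrier_mat n N \<and> A \<in> carrier_mat N N \<and> B \<in> carrier_mat N m \<and>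
              (\<forall>k. T k = complex_of_real (1 / qfact q k) \<cdot>\<^sub>m (C * A ^\<^sub>m k * B))"
  then obtain N C A B where "C \<in> carrier_mat n N" "A \<in> carrier_mat N N" "B \<in> carrier_mat N m"
    and "\<forall>k. T k = complex_of_real (1 / qfact q k) \<cdot>\<^sub>m (C * A ^\<^sub>m k * B)"
    by blast
  then show "fin_dim_span (hankel_col q n T ` (UNIV \<times> {..<m}))"
    by (intro fin_dim_hankel_if_moments[OF q]) auto
qed (rule moments_if_fin_dim_hankel[OF q dims])

section \<open>The operator R_q on power series\<close>

lemma powser_coeffs_zero:
  fixes d :: "nat \<Rightarrow> complex"
  assumes s: "s > 0" and sums_0: "\<And>z. norm z < s \<Longrightarrow> (\<lambda>i. d i * z ^ i) sums 0"
  shows "d k = 0"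
proof (induction k rule: less_induct)
  case (less k)
  have "(\<lambda>i. d (i + k) * z ^ i) sums 0" if z: "z \<noteq> 0" "norm z < s" for z
  proof -
    have "(\<lambda>i. d (i + k) * z ^ (i + k)) sums 0"
      using sums_zero_iff_shift[of k "\<lambda>i. d i * z ^ i" 0] less sums_0[OF z(2)] by simp
    then have "(\<lambda>i. z ^ k * (d (i + k) * z ^ i)) sums 0"
      by (simp add: power_add mult_ac)
    from sums_mult_D[OF this] show ?thesis using z by simp
  qed
  from powser_limit_0_strong[OF s this]
  have "((\<lambda>_. 0) \<longlongrightarrow> d (0 + k)) (at (0::complex))" by blast
  then show ?case using LIM_const_eq by fastforce
qed

lemma summable_Rq_coeffs:
  fixes c :: "nat \<Rightarrow> complex"
  assumes q: "0 \<le> q" "q < 1" and sm: "\<And>w. w \<in> ball 0 r \<Longrightarrow> summable (\<lambda>i. c i * w ^ i)"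
    and w: "w \<in> ball 0 r"
  shows "summable (\<lambda>i. (c (Suc i) * complex_of_real (qint q (Suc i))) * w ^ i)"
proof -
  define w' where "w' = complex_of_real ((norm w + r) / 2)"
  have nw: "norm w < r" using w by simp
  moreover have "0 \<le> norm w + r" using nw norm_ge_zero[of w] by linarith
  ultimately have nw': "norm w' = (norm w + r) / 2"
    unfolding w'_def norm_of_real by simp
  have "summable (\<lambda>i. diffs c i * w' ^ i)"
    by (rule termdiff_converges[of _ r]) (use nw nw' sm in auto)
  then have "summable (\<lambda>i. norm (diffs c i * w ^ i))"
    by (rule powser_insidea) (use nw nw' in simp)
  then show ?thesis
  proof (rule summable_comparison_test')
    fix i :: nat
    have "norm (complex_of_real (qint q (Suc i))) \<le> real (Suc i)"
      using qint_le_of_nat[of q "Suc i"] qint_nonneg[of q "Suc i"] q by simp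
    then have "norm (c (Suc i)) * norm (complex_of_real (qint q (Suc i))) * norm w ^ i
        \<le> norm (c (Suc i)) * real (Suc i) * norm w ^ i"
      by (intro mult_right_mono mult_left_mono) auto
    then show "norm ((c (Suc i) * complex_of_real (qint q (Suc i))) * w ^ i) \<le> norm (diffs c i * w ^ i)"
      by (simp only: diffs_def norm_mult norm_power norm_of_nat mult_ac)
  qed
qed

text \<open>At z = 0 this is termwise differentiation, elsewhere a termwise q-difference quotient.\<close>

lemma Rq_powser:
  fixes c :: "nat \<Rightarrow> complex"
  assumes q: "0 \<le> q" "q < 1" and r: "r > 0"
    and sm: "\<And>w. w \<in> ball 0 r \<Longrightarrow> summable (\<lambda>i. c i * w ^ i)"
    and g: "\<And>w. w \<in> ball 0 r \<Longrightarrow> g w = (\<Sum>i. c i * w ^ i)"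
    and z: "z \<in> ball 0 r"
  shows "Rq q g z = (\<Sum>i. (c (Suc i) * complex_of_real (qint q (Suc i))) * z ^ i)"
proof (cases "z = 0")
  case True
  define K where "K = complex_of_real (r / 2)"
  have K: "K \<in> ball 0 r" "norm (0::complex) < norm K" unfolding K_def using r by auto
  have "((\<lambda>x. \<Sum>i. c i * x ^ i) has_field_derivative (\<Sum>i. diffs c i * 0 ^ i)) (at 0)"
    by (rule termdiffs_strong[OF sm[OF K(1)] K(2)])
  then have "(g has_field_derivative (\<Sum>i. diffs c i * 0 ^ i)) (at 0)"
    by (rule has_field_derivative_transform_within_open[of _ _ _ "ball 0 r"]) (use r g in auto)
  then have "deriv g 0 = c 1" by (simp add: DERIV_imp_deriv diffs_def)
  then show ?thesis using True by (simp add: Rq_def qint_def)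
next
  case False
  have qz: "complex_of_real q * z \<in> ball 0 r"
  proof -
    have "norm (complex_of_real q * z) = q * norm z" using q by (simp add: norm_mult)
    also have "\<dots> \<le> norm z" using q by (simp add: mult_left_le_one_le)
    finally show ?thesis using z by simp
  qed
  define t where "t i = (c (Suc i) * complex_of_real (qint q (Suc i))) * z ^ i" for i
  have st: "summable t" unfolding t_def by (rule summable_Rq_coeffs[OF q sm z])
  define f where "f i = c i * z ^ i - c i * (complex_of_real q * z) ^ i" for i
  have sf: "summable f" unfolding f_def by (intro summable_diff sm z qz)
  have f_Suc: "f (Suc i) = (complex_of_real (1 - q) * z) * t i" for i
  proof -
    have "f (Suc i) = c (Suc i) * z ^ Suc i * (1 - complex_of_real (q ^ Suc i))"
      unfolding f_def by (simp add: power_mult_distrib algebra_simps)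
    also have "1 - complex_of_real (q ^ Suc i) = complex_of_real ((1 - q) * qint q (Suc i))"
      by (simp add: one_minus_q_mult_qint)
    finally show ?thesis unfolding t_def by (simp add: mult_ac)
  qed
  have "g z - g (complex_of_real q * z) = suminf f"
    unfolding f_def g[OF z] g[OF qz] by (rule suminf_diff) (intro sm z qz)+
  also have "\<dots> = (\<Sum>i. f (Suc i))" using suminf_split_head[OF sf] by (simp add: f_def)
  also have "\<dots> = (complex_of_real (1 - q) * z) * suminf t"
    unfolding f_Suc by (rule suminf_mult[OF st])
  finally have "g z - g (complex_of_real q * z) = (complex_of_real (1 - q) * z) * suminf t" .
  moreover have "complex_of_real (1 - q) * z \<noteq> 0" using False q by simp
  ultimately show ?thesis using False unfolding Rq_def t_def by (simp add: field_simps)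
qed

text \<open>Taylor coefficients of the entry (a, b) of R_q^k T.\<close>

definition Rq_coeff :: "real \<Rightarrow> (nat \<Rightarrow> complex mat) \<Rightarrow> nat \<Rightarrow> nat \<Rightarrow> nat \<Rightarrow> nat \<Rightarrow> complex" where
  "Rq_coeff q T k a b i = complex_of_real (qfact q (i + k) / qfact q i) * T (i + k) $$ (a, b)"

lemma Rq_coeff_0: "0 \<le> q \<Longrightarrow> Rq_coeff q T 0 a b i = T i $$ (a,b)"
  using qfact_pos[of q i] by (simp add: Rq_coeff_def)

lemma Rq_coeff_Suc:
  assumes q: "0 \<le> q"
  shows "Rq_coeff q T (Suc k) a b i = Rq_coeff q T k a b (Suc i) * complex_of_real (qint q (Suc i))"
proof -
  have "qint q (Suc i) \<noteq> 0" using qint_ge_1[OF q, of "Suc i"] by simp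
  then have "qfact q (i + Suc k) / qfact q i = qfact q (Suc i + k) / qfact q (Suc i) * qint q (Suc i)"
    using qfact_pos[OF q, of i] by (simp add: qfact_Suc)
  then show ?thesis by (simp add: Rq_coeff_def mult_ac flip: of_real_mult)
qed

lemma Rq_coeff_hankel_col:
  "0 \<le> q \<Longrightarrow> a < n \<Longrightarrow> Rq_coeff q T k a b i = complex_of_real (1 / qfact q i) * hankel_col q n T (k,b) (i,a)"
  by (simp add: Rq_coeff_def hankel_col_def divide_inverse mult_ac)

lemma summable_Rq_coeff:
  assumes q: "0 \<le> q" "q < 1"
    and conv: "\<And>z. z \<in> ball 0 r \<Longrightarrow> summable (\<lambda>k. T k $$ (a,b) * z ^ k)"
    and z: "z \<in> ball 0 r"
  shows "summable (\<lambda>i. Rq_coeff q T k a b i * z ^ i)"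
  using z
proof (induction k arbitrary: z)
  case 0 then show ?case using conv by (simp add: Rq_coeff_0[OF q(1)])
next
  case (Suc k)
  show ?case unfolding Rq_coeff_Suc[OF q(1)] by (rule summable_Rq_coeffs[OF q Suc.IH Suc.prems])
qed

lemma RqM_iterate_powser:
  assumes q: "0 \<le> q" "q < 1" and r: "r > 0"
    and conv: "\<And>z i j. z \<in> ball 0 r \<Longrightarrow> i < n \<Longrightarrow> j < m \<Longrightarrow>
                 summable (\<lambda>k. T k $$ (i,j) * z ^ k)"
    and z: "z \<in> ball 0 r" and a: "a < n" and b: "b < m"
  shows "((RqM q n m ^^ k) (Tser n m T)) z $$ (a,b) = (\<Sum>i. Rq_coeff q T k a b i * z ^ i)"
  using z
proof (induction k arbitrary: z)
  case 0 then show ?case using a b by (simp add: Tser_def Rq_coeff_0[OF q(1)])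
next
  case (Suc k)
  have "((RqM q n m ^^ Suc k) (Tser n m T)) z $$ (a,b) = Rq q (\<lambda>w. ((RqM q n m ^^ k) (Tser n m T)) w $$ (a,b)) z"
    using a b by (simp add: RqM_def)
  also have "\<dots> = (\<Sum>i. (Rq_coeff q T k a b (Suc i) * complex_of_real (qint q (Suc i))) * z ^ i)"
    by (rule Rq_powser[OF q r _ Suc.IH Suc.prems]) (rule summable_Rq_coeff[OF q conv], use a b in auto)
  finally show ?case by (simp add: Rq_coeff_Suc[OF q(1)])
qed

definition Rq_col :: "real \<Rightarrow> real \<Rightarrow> nat \<Rightarrow> (nat \<Rightarrow> complex mat) \<Rightarrow> nat \<times> nat \<Rightarrow> complex \<times> nat \<Rightarrow> complex" where
  "Rq_col q r n T kb za = (if fst za \<in> ball 0 r \<and> snd za < n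
     then (\<Sum>i. Rq_coeff q T (fst kb) (snd za) (snd kb) i * fst za ^ i) else 0)"

lemma image_RqM_iterate_cols_eq:
  assumes q: "0 \<le> q" "q < 1" and r: "r > 0"
    and conv: "\<And>z i j. z \<in> ball 0 r \<Longrightarrow> i < n \<Longrightarrow> j < m \<Longrightarrow>
                 summable (\<lambda>k. T k $$ (i,j) * z ^ k)"
  shows "(\<lambda>(k,b). (\<lambda>(z,a). if z \<in> ball 0 r \<and> a < n
                                    then ((RqM q n m ^^ k) (Tser n m T)) z $$ (a,b) else 0))
                 ` (UNIV \<times> {..<m}) = Rq_col q r n T ` (UNIV \<times> {..<m})"
  by (rule image_cong[OF refl])
     (auto simp: Rq_col_def fun_eq_iff intro!: RqM_iterate_powser[OF q r conv])

lemma sums_Rq_col_combination: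
  assumes q: "0 \<le> q" "q < 1"
    and conv: "\<And>z i j. z \<in> ball 0 r \<Longrightarrow> i < n \<Longrightarrow> j < m \<Longrightarrow>
                 summable (\<lambda>k. T k $$ (i,j) * z ^ k)"
    and J: "J \<subseteq> UNIV \<times> {..<m}" and i: "i \<in> UNIV \<times> {..<m}"
    and z: "z \<in> ball 0 r" and a: "a < n"
  shows "(\<lambda>j. (Rq_coeff q T (fst i) a (snd i) j - (\<Sum>l\<in>J. c l * Rq_coeff q T (fst l) a (snd l) j)) * z ^ j)
           sums (Rq_col q r n T i (z,a) - (\<Sum>l\<in>J. c l * Rq_col q r n T l (z,a)))"
proof -
  have sums_col: "(\<lambda>j. Rq_coeff q T (fst l) a (snd l) j * z ^ j) sums Rq_col q r n T l (z,a)"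
    if "l \<in> insert i J" for l
  proof -
    have "summable (\<lambda>j. Rq_coeff q T (fst l) a (snd l) j * z ^ j)"
      by (rule summable_Rq_coeff[OF q conv]) (use that J i a z in auto)
    then show ?thesis using a z by (simp add: Rq_col_def summable_sums)
  qed
  have "(\<lambda>j. \<Sum>l\<in>J. c l * (Rq_coeff q T (fst l) a (snd l) j * z ^ j))
          sums (\<Sum>l\<in>J. c l * Rq_col q r n T l (z,a))"
    by (intro sums_sum sums_mult sums_col) simp
  from sums_diff[OF sums_col[of i] this] show ?thesis
    by (simp add: left_diff_distrib sum_distrib_right mult.assoc)
qed

lemma Rq_col_relation_iff_hankel_col_relation:
  assumes q: "0 \<le> q" "q < 1" and r: "r > 0"
    and conv: "\<And>z i j. z \<in> ball 0 r \<Longrightarrow> i < n \<Longrightarrow> j < m \<Longrightarrow>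
                 summable (\<lambda>k. T k $$ (i,j) * z ^ k)"
    and J: "J \<subseteq> UNIV \<times> {..<m}" and i: "i \<in> UNIV \<times> {..<m}"
  shows "Rq_col q r n T i = (\<lambda>y. \<Sum>l\<in>J. c l * Rq_col q r n T l y) \<longleftrightarrow>
         hankel_col q n T i = (\<lambda>y. \<Sum>l\<in>J. c l * hankel_col q n T l y)"
proof -
  define d where "d a j = Rq_coeff q T (fst i) a (snd i) j - (\<Sum>l\<in>J. c l * Rq_coeff q T (fst l) a (snd l) j)"
    for a j
  have series: "(\<lambda>j. d a j * z ^ j) sums (Rq_col q r n T i (z,a) - (\<Sum>l\<in>J. c l * Rq_col q r n T l (z,a)))"
    if "z \<in> ball 0 r" "a < n" for z a
    unfolding d_def by (rule sums_Rq_col_combination[OF q conv J i that])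
  have d_hankel: "d a j = complex_of_real (1 / qfact q j) *
                    (hankel_col q n T i (j,a) - (\<Sum>l\<in>J. c l * hankel_col q n T l (j,a)))"
    if a: "a < n" for a j
    by (simp add: d_def Rq_coeff_hankel_col[OF q(1) a] sum_distrib_left right_diff_distrib mult.left_commute)
  have hankel_col_0: "hankel_col q n T l (j,a) = 0" if "\<not> a < n" for l j a
    using that by (cases l) (simp add: hankel_col_def)
  have qfact_nz: "complex_of_real (1 / qfact q j) \<noteq> 0" for j
    using qfact_pos[OF q(1), of j] by simp
  show ?thesis
  proof
    assume rel: "Rq_col q r n T i = (\<lambda>y. \<Sum>l\<in>J. c l * Rq_col q r n T l y)"
    have "d a j = 0" if a: "a < n" for a j
    proof (rule powser_coeffs_zero[OF r])
      fix z :: complex assume "norm z < r"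
      then show "(\<lambda>j. d a j * z ^ j) sums 0" using series[of z a] a rel by simp
    qed
    then have "hankel_col q n T i (j,a) = (\<Sum>l\<in>J. c l * hankel_col q n T l (j,a))" for j a
      using d_hankel qfact_nz hankel_col_0 by (cases "a < n") auto
    then show "hankel_col q n T i = (\<lambda>y. \<Sum>l\<in>J. c l * hankel_col q n T l y)"
      by (auto simp: fun_eq_iff)
  next
    assume "hankel_col q n T i = (\<lambda>y. \<Sum>l\<in>J. c l * hankel_col q n T l y)"
    then have "d a j = 0" if "a < n" for a j
      using d_hankel[OF that, of j] by simp
    then have "Rq_col q r n T i (z,a) = (\<Sum>l\<in>J. c l * Rq_col q r n T l (z,a))" for z a
    proof (cases "z \<in> ball 0 r \<and> a < n")
      case True
      with series[of z a] \<open>\<And>a j. a < n \<Longrightarrow> d a j = 0\<close>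
      have "(\<lambda>j. 0) sums (Rq_col q r n T i (z,a) - (\<Sum>l\<in>J. c l * Rq_col q r n T l (z,a)))"
        by simp
      from sums_unique2[OF sums_zero this] show ?thesis by simp
    qed (auto simp: Rq_col_def)
    then show "Rq_col q r n T i = (\<lambda>y. \<Sum>l\<in>J. c l * Rq_col q r n T l y)"
      by (auto simp: fun_eq_iff)
  qed
qed

lemma fin_dim_hankel_iff_fin_dim_Rq_cols:
  assumes q: "0 \<le> q" "q < 1" and r: "r > 0"
    and conv: "\<And>z i j. z \<in> ball 0 r \<Longrightarrow> i < n \<Longrightarrow> j < m \<Longrightarrow>
                 summable (\<lambda>k. T k $$ (i,j) * z ^ k)"
  shows "fin_dim_span (hankel_col q n T ` (UNIV \<times> {..<m})) \<longleftrightarrow>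
         fin_dim_span (Rq_col q r n T ` (UNIV \<times> {..<m}))"
proof
  assume "fin_dim_span (hankel_col q n T ` (UNIV \<times> {..<m}))"
  then show "fin_dim_span (Rq_col q r n T ` (UNIV \<times> {..<m}))"
  proof (rule fin_dim_span_transfer)
    fix J c i assume "J \<subseteq> UNIV \<times> {..<m}" "i \<in> UNIV \<times> {..<m}"
      and "hankel_col q n T i = (\<lambda>x. \<Sum>l\<in>J. c l * hankel_col q n T l x)"
    then show "Rq_col q r n T i = (\<lambda>y. \<Sum>l\<in>J. c l * Rq_col q r n T l y)"
      using Rq_col_relation_iff_hankel_col_relation[OF q r conv] by blast
  qed
next
  assume "fin_dim_span (Rq_col q r n T ` (UNIV \<times> {..<m}))"
  then show "fin_dim_span (hankel_col q n T ` (UNIV \<times> {..<m}))"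
  proof (rule fin_dim_span_transfer)
    fix J c i assume "J \<subseteq> UNIV \<times> {..<m}" "i \<in> UNIV \<times> {..<m}"
      and "Rq_col q r n T i = (\<lambda>x. \<Sum>l\<in>J. c l * Rq_col q r n T l x)"
    then show "hankel_col q n T i = (\<lambda>y. \<Sum>l\<in>J. c l * hankel_col q n T l y)"
      using Rq_col_relation_iff_hankel_col_relation[OF q r conv] by blast
  qed
qed

section \<open>An entrywise norm and series of matrices\<close>

definition mat_l1_norm :: "complex mat \<Rightarrow> real" where
  "mat_l1_norm X = (\<Sum>p<dim_row X. \<Sum>l<dim_col X. norm (X $$ (p,l)))"

lemma mat_l1_norm_nonneg: "0 \<le> mat_l1_norm X"
  unfolding mat_l1_norm_def by (intro sum_nonneg) auto

lemma norm_index_le_mat_l1_norm: assumes "p < dim_row X" "l < dim_col X" shows "norm (X $$ (p,l)) \<le> mat_l1_norm X"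
proof -
  have "norm (X $$ (p,l)) \<le> (\<Sum>l<dim_col X. norm (X $$ (p,l)))"
    by (rule member_le_sum[where f="\<lambda>l. norm (X $$ (p,l))"]) (use assms in auto)
  also have "\<dots> \<le> mat_l1_norm X" unfolding mat_l1_norm_def
    by (rule member_le_sum[where f="\<lambda>p. \<Sum>l<dim_col X. norm (X $$ (p,l))"]) (use assms in \<open>auto intro: sum_nonneg\<close>)
  finally show ?thesis .
qed

lemma row_norm_sum_le_mat_l1_norm: assumes "s < dim_row X" shows "(\<Sum>l<dim_col X. norm (X $$ (s,l))) \<le> mat_l1_norm X"
  unfolding mat_l1_norm_def
  by (rule member_le_sum[where f="\<lambda>p. \<Sum>l<dim_col X. norm (X $$ (p,l))"]) (use assms in \<open>auto intro: sum_nonneg\<close>)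

lemma mat_l1_norm_mult:
  assumes X: "X \<in> carrier_mat a b" and Y: "Y \<in> carrier_mat b c"
  shows "mat_l1_norm (X * Y) \<le> mat_l1_norm X * mat_l1_norm Y"
proof -
  have dims: "dim_row (X * Y) = a" "dim_col (X * Y) = c" using X Y by auto
  have "mat_l1_norm (X * Y) = (\<Sum>p<a. \<Sum>l<c. norm (\<Sum>s<b. X $$ (p,s) * Y $$ (s,l)))"
    unfolding mat_l1_norm_def dims by (intro sum.cong refl arg_cong[where f=norm] index_mult_mat_sum[OF X Y]) auto
  also have "\<dots> \<le> (\<Sum>p<a. \<Sum>l<c. \<Sum>s<b. norm (X $$ (p,s)) * norm (Y $$ (s,l)))"
    by (intro sum_mono order.trans[OF norm_sum]) (simp add: norm_mult)
  also have "\<dots> = (\<Sum>p<a. \<Sum>s<b. norm (X $$ (p,s)) * (\<Sum>l<c. norm (Y $$ (s,l))))"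
    by (simp add: sum_distrib_left sum.swap[of _ "{..<c}"])
  also have "\<dots> \<le> (\<Sum>p<a. \<Sum>s<b. norm (X $$ (p,s)) * mat_l1_norm Y)"
    by (intro sum_mono mult_left_mono) (use row_norm_sum_le_mat_l1_norm[of _ Y] Y in auto)
  also have "\<dots> = mat_l1_norm X * mat_l1_norm Y"
    unfolding mat_l1_norm_def using X by (simp add: sum_distrib_right)
  finally show ?thesis .
qed

lemma mat_l1_norm_add: assumes "X \<in> carrier_mat a b" "Y \<in> carrier_mat a b" shows "mat_l1_norm (X + Y) \<le> mat_l1_norm X + mat_l1_norm Y"
proof -
  have "mat_l1_norm (X + Y) = (\<Sum>p<a. \<Sum>l<b. norm (X $$ (p,l) + Y $$ (p,l)))"
    unfolding mat_l1_norm_def using assms by (auto intro!: sum.cong)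
  also have "\<dots> \<le> (\<Sum>p<a. \<Sum>l<b. norm (X $$ (p,l)) + norm (Y $$ (p,l)))"
    by (intro sum_mono norm_triangle_ineq)
  also have "\<dots> = mat_l1_norm X + mat_l1_norm Y" unfolding mat_l1_norm_def using assms by (simp add: sum.distrib)
  finally show ?thesis .
qed

lemma mat_l1_norm_uminus: "mat_l1_norm (- X) = mat_l1_norm X"
  unfolding mat_l1_norm_def by (auto intro!: sum.cong)

lemma mat_l1_norm_smult: "mat_l1_norm (c \<cdot>\<^sub>m X) = norm c * mat_l1_norm X"
  unfolding mat_l1_norm_def by (auto simp: norm_mult sum_distrib_left intro!: sum.cong)

lemma mat_l1_norm_one: "mat_l1_norm (1\<^sub>m N) = real N"
proof -
  have "mat_l1_norm (1\<^sub>m N) = (\<Sum>p<N. \<Sum>l<N. cmod (if p = l then (1::complex) else 0))"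
    unfolding mat_l1_norm_def by (auto intro!: sum.cong)
  also have "\<dots> = (\<Sum>p<N. 1)"
  proof (rule sum.cong[OF refl])
    fix p assume p: "p \<in> {..<N}"
    have "(\<Sum>l<N. cmod (if p = l then (1::complex) else 0)) = (\<Sum>l<N. if p = l then 1 else 0)"
      by (rule sum.cong) auto
    also have "\<dots> = 1" using p by simp
    finally show "(\<Sum>l<N. cmod (if p = l then (1::complex) else 0)) = 1" .
  qed
  finally show ?thesis by simp
qed

lemma mat_l1_norm_pow: assumes A: "A \<in> carrier_mat N N" shows "mat_l1_norm (A ^\<^sub>m k) \<le> real N * mat_l1_norm A ^ k"
proof (induction k)
  case 0 then show ?case using A by (simp add: mat_l1_norm_one)
next
  case (Suc k)
  have "mat_l1_norm (A ^\<^sub>m Suc k) \<le> mat_l1_norm (A ^\<^sub>m k) * mat_l1_norm A" using A by (simp add: mat_l1_norm_mult[of _ N N _ N])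
  also have "\<dots> \<le> real N * mat_l1_norm A ^ k * mat_l1_norm A" by (rule mult_right_mono[OF Suc mat_l1_norm_nonneg])
  finally show ?case by (simp add: mult_ac)
qed

definition mat_suminf :: "nat \<Rightarrow> nat \<Rightarrow> (nat \<Rightarrow> complex mat) \<Rightarrow> complex mat" where
  "mat_suminf nr nc f = mat nr nc (\<lambda>(p,l). \<Sum>k. f k $$ (p,l))"

definition mat_summable :: "nat \<Rightarrow> nat \<Rightarrow> (nat \<Rightarrow> complex mat) \<Rightarrow> bool" where
  "mat_summable nr nc f \<longleftrightarrow> (\<forall>p<nr. \<forall>l<nc. summable (\<lambda>k. f k $$ (p,l)))"

lemma mat_suminf_carrier[simp]: "mat_suminf nr nc f \<in> carrier_mat nr nc"
  by (simp add: mat_suminf_def)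

lemma mat_suminf_dims[simp]: "dim_row (mat_suminf nr nc f) = nr" "dim_col (mat_suminf nr nc f) = nc"
  by (simp_all add: mat_suminf_def)

lemma index_mat_suminf: "p < nr \<Longrightarrow> l < nc \<Longrightarrow> mat_suminf nr nc f $$ (p,l) = (\<Sum>k. f k $$ (p,l))"
  by (simp add: mat_suminf_def)

lemma mat_summableI:
  assumes "\<And>k. f k \<in> carrier_mat nr nc" "summable (\<lambda>k. mat_l1_norm (f k))"
  shows "mat_summable nr nc f"
  unfolding mat_summable_def
proof (intro allI impI)
  fix p l assume "p < nr" "l < nc"
  then show "summable (\<lambda>k. f k $$ (p,l))"
    by (intro summable_comparison_test'[OF assms(2)] norm_index_le_mat_l1_norm) (auto simp: carrier_matD[OF assms(1)])
qed

lemma mult_mat_suminf: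
  assumes X: "X \<in> carrier_mat a nr" and f: "\<And>k. f k \<in> carrier_mat nr nc" and s: "mat_summable nr nc f"
  shows "mat_summable a nc (\<lambda>k. X * f k)" "X * mat_suminf nr nc f = mat_suminf a nc (\<lambda>k. X * f k)"
proof -
  have e: "(X * f k) $$ (p,l) = (\<Sum>s<nr. X $$ (p,s) * f k $$ (s,l))" if "p < a" "l < nc" for p l k
    by (rule index_mult_mat_sum[OF X f that])
  show "mat_summable a nc (\<lambda>k. X * f k)" unfolding mat_summable_def
    using s by (auto simp: e mat_summable_def intro!: summable_sum summable_mult)
  show "X * mat_suminf nr nc f = mat_suminf a nc (\<lambda>k. X * f k)"
  proof (rule eq_matI)
    fix p l assume pl: "p < dim_row (mat_suminf a nc (\<lambda>k. X * f k))" "l < dim_col (mat_suminf a nc (\<lambda>k. X * f k))"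
    then have p: "p < a" and l: "l < nc" by auto
    have "(X * mat_suminf nr nc f) $$ (p,l) = (\<Sum>s<nr. X $$ (p,s) * (\<Sum>k. f k $$ (s,l)))"
      using index_mult_mat_sum[OF X mat_suminf_carrier p l] by (simp add: index_mat_suminf l)
    also have "\<dots> = (\<Sum>s<nr. \<Sum>k. X $$ (p,s) * f k $$ (s,l))"
      using s l by (auto simp: mat_summable_def intro!: sum.cong suminf_mult[symmetric])
    also have "\<dots> = (\<Sum>k. \<Sum>s<nr. X $$ (p,s) * f k $$ (s,l))"
      using s l by (intro suminf_sum[symmetric]) (auto simp: mat_summable_def intro!: summable_mult)
    also have "\<dots> = mat_suminf a nc (\<lambda>k. X * f k) $$ (p,l)"
      by (simp add: index_mat_suminf p l e)
    finally show "(X * mat_suminf nr nc f) $$ (p,l) = mat_suminf a nc (\<lambda>k. X * f k) $$ (p,l)" .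
  qed (use X in auto)
qed

lemma mat_suminf_mult:
  assumes X: "X \<in> carrier_mat nc c" and f: "\<And>k. f k \<in> carrier_mat nr nc" and s: "mat_summable nr nc f"
  shows "mat_summable nr c (\<lambda>k. f k * X)" "mat_suminf nr nc f * X = mat_suminf nr c (\<lambda>k. f k * X)"
proof -
  have e: "(f k * X) $$ (p,l) = (\<Sum>s<nc. f k $$ (p,s) * X $$ (s,l))" if "p < nr" "l < c" for p l k
    by (rule index_mult_mat_sum[OF f X that])
  show "mat_summable nr c (\<lambda>k. f k * X)" unfolding mat_summable_def
    using s by (auto simp: e mat_summable_def intro!: summable_sum summable_mult2)
  show "mat_suminf nr nc f * X = mat_suminf nr c (\<lambda>k. f k * X)"
  proof (rule eq_matI)
    fix p l assume pl: "p < dim_row (mat_suminf nr c (\<lambda>k. f k * X))" "l < dim_col (mat_suminf nr c (\<lambda>k. f k * X))"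
    then have p: "p < nr" and l: "l < c" by auto
    have "(mat_suminf nr nc f * X) $$ (p,l) = (\<Sum>s<nc. (\<Sum>k. f k $$ (p,s)) * X $$ (s,l))"
      using index_mult_mat_sum[OF mat_suminf_carrier X p l] by (simp add: index_mat_suminf p)
    also have "\<dots> = (\<Sum>s<nc. \<Sum>k. f k $$ (p,s) * X $$ (s,l))"
      using s p by (auto simp: mat_summable_def intro!: sum.cong suminf_mult2)
    also have "\<dots> = (\<Sum>k. \<Sum>s<nc. f k $$ (p,s) * X $$ (s,l))"
      using s p by (intro suminf_sum[symmetric]) (auto simp: mat_summable_def intro!: summable_mult2)
    also have "\<dots> = mat_suminf nr c (\<lambda>k. f k * X) $$ (p,l)"
      by (simp add: index_mat_suminf p l e)
    finally show "(mat_suminf nr nc f * X) $$ (p,l) = mat_suminf nr c (\<lambda>k. f k * X) $$ (p,l)" .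
  qed (use X in auto)
qed

lemma mat_suminf_diff:
  assumes f: "\<And>k. f k \<in> carrier_mat nr nc" and g: "\<And>k. g k \<in> carrier_mat nr nc"
    and sf: "mat_summable nr nc f" and sg: "mat_summable nr nc g"
  shows "mat_suminf nr nc f - mat_suminf nr nc g = mat_suminf nr nc (\<lambda>k. f k - g k)"
  by (rule eq_matI) (use f g sf sg in \<open>auto simp: index_mat_suminf mat_summable_def suminf_diff carrier_matD[OF f] carrier_matD[OF g]\<close>)

lemma mat_suminf_split_head:
  assumes f: "\<And>k. f k \<in> carrier_mat nr nc" and sf: "mat_summable nr nc f"
  shows "mat_suminf nr nc f = f 0 + mat_suminf nr nc (\<lambda>k. f (Suc k))"
proof (rule eq_matI)
  fix p l assume "p < dim_row (f 0 + mat_suminf nr nc (\<lambda>k. f (Suc k)))" "l < dim_col (f 0 + mat_suminf nr nc (\<lambda>k. f (Suc k)))"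
  then have p: "p < nr" and l: "l < nc" by auto
  have "summable (\<lambda>k. f k $$ (p,l))" using sf p l by (simp add: mat_summable_def)
  from suminf_split_head[OF this] show "mat_suminf nr nc f $$ (p,l) = (f 0 + mat_suminf nr nc (\<lambda>k. f (Suc k))) $$ (p,l)"
    using p l f[of 0] by (simp add: index_mat_suminf)
qed (use f in auto)

lemma mat_l1_norm_suminf_le:
  assumes f: "\<And>k. f k \<in> carrier_mat nr nc" and s: "summable (\<lambda>k. mat_l1_norm (f k))"
  shows "mat_l1_norm (mat_suminf nr nc f) \<le> (\<Sum>k. mat_l1_norm (f k))"
proof -
  have sn: "summable (\<lambda>k. norm (f k $$ (p,l)))" if "p < nr" "l < nc" for p l
  proof -
    have "norm (f k $$ (p,l)) \<le> mat_l1_norm (f k)" for k by (rule norm_index_le_mat_l1_norm) (auto simp: carrier_matD[OF f] that)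
    then show ?thesis by (intro summable_comparison_test'[OF s]) simp
  qed
  have "mat_l1_norm (mat_suminf nr nc f) = (\<Sum>p<nr. \<Sum>l<nc. norm (\<Sum>k. f k $$ (p,l)))"
    unfolding mat_l1_norm_def by (auto simp: index_mat_suminf intro!: sum.cong)
  also have "\<dots> \<le> (\<Sum>p<nr. \<Sum>l<nc. \<Sum>k. norm (f k $$ (p,l)))"
    by (intro sum_mono summable_norm sn) auto
  also have "\<dots> = (\<Sum>k. \<Sum>p<nr. \<Sum>l<nc. norm (f k $$ (p,l)))"
  proof -
    have "(\<Sum>p<nr. \<Sum>l<nc. \<Sum>k. norm (f k $$ (p,l))) = (\<Sum>p<nr. \<Sum>k. \<Sum>l<nc. norm (f k $$ (p,l)))"
      by (rule sum.cong[OF refl], rule suminf_sum[symmetric]) (use sn in auto)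
    also have "\<dots> = (\<Sum>k. \<Sum>p<nr. \<Sum>l<nc. norm (f k $$ (p,l)))"
      by (rule suminf_sum[symmetric]) (use sn in \<open>auto intro!: summable_sum\<close>)
    finally show ?thesis .
  qed
  also have "\<dots> = (\<Sum>k. mat_l1_norm (f k))"
    unfolding mat_l1_norm_def by (simp add: carrier_matD[OF f])
  finally show ?thesis .
qed

lemma summable_mat_l1_norm_geometric:
  assumes "\<And>k. mat_l1_norm (f k) \<le> real N * t ^ k" "0 \<le> t" "t < 1"
  shows "summable (\<lambda>k. mat_l1_norm (f k))"
proof (rule summable_comparison_test'[of "\<lambda>k. real N * t ^ k"])
  show "summable (\<lambda>k. real N * t ^ k)" using assms by (intro summable_mult summable_geometric) auto
  show "norm (mat_l1_norm (f k)) \<le> real N * t ^ k" for k using assms(1)[of k] mat_l1_norm_nonneg[of "f k"] by simp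
qed

lemma invertible_one_minus_mat:
  assumes X: "X \<in> carrier_mat N N" and small: "mat_l1_norm X < 1"
  shows "invertible_mat (1\<^sub>m N - X)"
proof -
  define f where "f k = X ^\<^sub>m k" for k
  have fc: "f k \<in> carrier_mat N N" for k unfolding f_def using X by simp
  have sm: "summable (\<lambda>k. mat_l1_norm (f k))"
    by (rule summable_mat_l1_norm_geometric[of _ N "mat_l1_norm X"]) (use mat_l1_norm_pow[OF X] small mat_l1_norm_nonneg in \<open>auto simp: f_def\<close>)
  have ms: "mat_summable N N f" by (rule mat_summableI[OF fc sm])
  define S where "S = mat_suminf N N f"
  have Sc: "S \<in> carrier_mat N N" unfolding S_def by simp
  have XS: "X * S = mat_suminf N N (\<lambda>k. f (Suc k))"
    unfolding S_def mult_mat_suminf(2)[OF X fc ms] f_def by (simp add: pow_mat_Suc_left[OF X])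
  have SX: "S * X = mat_suminf N N (\<lambda>k. f (Suc k))"
    unfolding S_def mat_suminf_mult(2)[OF X fc ms] f_def by simp
  have Sshift: "S = 1\<^sub>m N + mat_suminf N N (\<lambda>k. f (Suc k))"
    unfolding S_def using mat_suminf_split_head[OF fc ms] X by (simp add: f_def)
  have SM: "S - mat_suminf N N (\<lambda>k. f (Suc k)) = 1\<^sub>m N"
    unfolding Sshift by (rule eq_matI) auto
  have "(1\<^sub>m N - X) * S = 1\<^sub>m N * S - X * S"
    by (rule minus_mult_distrib_mat[OF one_carrier_mat X Sc])
  also have "\<dots> = 1\<^sub>m N" unfolding XS using SM Sc by simp
  finally have r1: "(1\<^sub>m N - X) * S = 1\<^sub>m N" .
  have "S * (1\<^sub>m N - X) = S * 1\<^sub>m N - S * X"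
    by (rule mult_minus_distrib_mat[OF Sc one_carrier_mat X])
  also have "\<dots> = 1\<^sub>m N" unfolding SX using SM Sc by simp
  finally have r2: "S * (1\<^sub>m N - X) = 1\<^sub>m N" .
  show ?thesis unfolding invertible_mat_def inverts_mat_def
    using r1 r2 Sc X by (intro conjI exI[of _ S]) (auto simp: square_mat.simps)
qed

lemma minv_inverse:
  assumes inv: "invertible_mat M" and Mc: "M \<in> carrier_mat N N"
  shows "minv M \<in> carrier_mat N N" "M * minv M = 1\<^sub>m N" "minv M * M = 1\<^sub>m N"
proof -
  have ex: "\<exists>B. inverts_mat M B \<and> inverts_mat B M" using inv unfolding invertible_mat_def by blast
  have h: "inverts_mat M (minv M) \<and> inverts_mat (minv M) M"
    unfolding minv_def by (rule someI_ex[OF ex])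
  then have h1: "M * minv M = 1\<^sub>m N" and h2: "minv M * M = 1\<^sub>m (dim_row (minv M))"
    using Mc unfolding inverts_mat_def by auto
  have c1: "dim_col (minv M) = N" using arg_cong[OF h1, of dim_col] by simp
  have c2: "dim_row (minv M) = N" using arg_cong[OF h2, of dim_col] Mc by simp
  show "minv M \<in> carrier_mat N N" using c1 c2 by auto
  show "M * minv M = 1\<^sub>m N" by (rule h1)
  show "minv M * M = 1\<^sub>m N" using h2 c2 by simp
qed

section \<open>The matrix q-exponential\<close>

definition qexp_term :: "real \<Rightarrow> complex mat \<Rightarrow> complex \<Rightarrow> nat \<Rightarrow> complex mat" where
  "qexp_term q A w k = (complex_of_real (1 / qfact q k) * w ^ k) \<cdot>\<^sub>m (A ^\<^sub>m k)"

definition qexp_mat :: "real \<Rightarrow> complex mat \<Rightarrow> complex \<Rightarrow> complex mat" where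
  "qexp_mat q A w = mat_suminf (dim_row A) (dim_row A) (qexp_term q A w)"

lemma qexp_term_carrier: "A \<in> carrier_mat N N \<Longrightarrow> qexp_term q A w k \<in> carrier_mat N N"
  by (simp add: qexp_term_def)

lemma qexp_term_0: "A \<in> carrier_mat N N \<Longrightarrow> qexp_term q A w 0 = 1\<^sub>m N"
  by (rule eq_matI) (auto simp: qexp_term_def)

lemma qexp_mat_carrier: "A \<in> carrier_mat N N \<Longrightarrow> qexp_mat q A w \<in> carrier_mat N N"
  by (simp add: qexp_mat_def)

lemma norm_mult_power_le:
  assumes "norm (c::complex) \<le> 1" shows "norm (c * w ^ k) \<le> norm w ^ k"
proof -
  have "norm (c * w ^ k) = norm c * norm w ^ k" by (simp only: norm_mult norm_power)
  also have "\<dots> \<le> 1 * norm w ^ k" by (rule mult_right_mono) (use assms in auto)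
  finally show ?thesis by simp
qed

lemma mat_l1_norm_qexp_term:
  assumes A: "A \<in> carrier_mat N N" and q: "0 \<le> q"
  shows "mat_l1_norm (qexp_term q A w k) \<le> real N * (norm w * mat_l1_norm A) ^ k"
proof -
  have "\<bar>1 / qfact q k\<bar> \<le> 1"
    using qfact_ge_1[OF q, of k] by (simp add: divide_le_eq_1_pos)
  then have "norm (complex_of_real (1 / qfact q k)) \<le> 1"
    unfolding norm_of_real .
  then have "norm (complex_of_real (1 / qfact q k) * w ^ k) \<le> norm w ^ k"
    by (rule norm_mult_power_le)
  moreover have "mat_l1_norm (A ^\<^sub>m k) \<le> real N * mat_l1_norm A ^ k" by (rule mat_l1_norm_pow[OF A])
  ultimately have "norm (complex_of_real (1 / qfact q k) * w ^ k) * mat_l1_norm (A ^\<^sub>m k)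
                     \<le> norm w ^ k * (real N * mat_l1_norm A ^ k)"
    by (intro mult_mono) (auto simp: mat_l1_norm_nonneg)
  then show ?thesis by (simp add: qexp_term_def mat_l1_norm_smult power_mult_distrib mult_ac)
qed

lemma summable_qexp_term:
  assumes A: "A \<in> carrier_mat N N" and q: "0 \<le> q" and w: "norm w * mat_l1_norm A < 1"
  shows "summable (\<lambda>k. mat_l1_norm (qexp_term q A w k))" "mat_summable N N (qexp_term q A w)"
proof -
  show s: "summable (\<lambda>k. mat_l1_norm (qexp_term q A w k))"
    by (rule summable_mat_l1_norm_geometric[OF mat_l1_norm_qexp_term[OF A q]])
       (use w in \<open>auto intro: mult_nonneg_nonneg mat_l1_norm_nonneg\<close>)
  show "mat_summable N N (qexp_term q A w)" by (rule mat_summableI[OF qexp_term_carrier[OF A] s])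
qed

lemma norm_q_mult_le:
  assumes "0 \<le> q" "q \<le> 1" shows "norm (complex_of_real q * w) \<le> norm w"
  using assms by (simp add: norm_mult mult_left_le_one_le)

lemma qexp_coeff_Suc:
  assumes q: "0 \<le> q"
  shows "complex_of_real (1 - q) * w * (complex_of_real (1 / qfact q k) * w ^ k)
       = complex_of_real ((1 - q ^ Suc k) / qfact q (Suc k)) * w ^ Suc k"
proof -
  have "qint q (Suc k) \<noteq> 0" using qint_ge_1[OF q, of "Suc k"] by simp
  moreover have qf: "qfact q k \<noteq> 0" using qfact_pos[OF q, of k] by simp
  ultimately have e: "(1 - q ^ Suc k) / qfact q (Suc k) = (1 - q) / qfact q k"
    unfolding one_minus_q_mult_qint[symmetric] qfact_Suc by simp
  have "complex_of_real (qfact q k) \<noteq> 0" using qf by simp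
  then show ?thesis unfolding e by (simp add: field_simps)
qed

lemma qexp_coeff_diff:
  assumes q: "0 \<le> q"
  shows "complex_of_real ((1 - q ^ k) / qfact q k) * w ^ k
       = complex_of_real (1 / qfact q k) * w ^ k - complex_of_real (1 / qfact q k) * (complex_of_real q * w) ^ k"
  using qfact_pos[OF q, of k] by (simp add: field_simps power_mult_distrib)

text \<open>(1 - q) w A maps the k-th term of E(w) to the difference of the (k+1)-st terms of E(w) and
  E(q w), so (1 - q) w A E(w) telescopes to E(w) - E(q w).\<close>

lemma qexp_mat_functional_eq:
  assumes A: "A \<in> carrier_mat N N" and q: "0 \<le> q" "q < 1" and w: "norm w * mat_l1_norm A < 1"
  shows "(1\<^sub>m N - (complex_of_real (1 - q) * w) \<cdot>\<^sub>m A) * qexp_mat q A w = qexp_mat q A (complex_of_real q * w)"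
proof -
  define X where "X = (complex_of_real (1 - q) * w) \<cdot>\<^sub>m A"
  define g where "g k = qexp_term q A w k - qexp_term q A (complex_of_real q * w) k" for k
  have X: "X \<in> carrier_mat N N" unfolding X_def using A by simp
  have dA: "dim_row A = N" using A by simp
  have "norm (complex_of_real q * w) * mat_l1_norm A \<le> norm w * mat_l1_norm A"
    using q by (intro mult_right_mono norm_q_mult_le mat_l1_norm_nonneg) auto
  then have qw: "norm (complex_of_real q * w) * mat_l1_norm A < 1" using w by linarith
  have terms: "\<And>u k. qexp_term q A u k \<in> carrier_mat N N" by (rule qexp_term_carrier[OF A])
  have sw: "mat_summable N N (qexp_term q A w)" by (rule summable_qexp_term(2)[OF A q(1) w])
  have sqw: "mat_summable N N (qexp_term q A (complex_of_real q * w))"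
    by (rule summable_qexp_term(2)[OF A q(1) qw])
  have g: "g k \<in> carrier_mat N N" for k unfolding g_def by (intro minus_carrier_mat terms)
  have sg: "mat_summable N N g" using sw sqw unfolding g_def mat_summable_def
    by (auto simp: carrier_matD[OF terms] intro: summable_diff)
  have g_coeff: "g k = (complex_of_real ((1 - q ^ k) / qfact q k) * w ^ k) \<cdot>\<^sub>m A ^\<^sub>m k" for k
    unfolding g_def qexp_term_def qexp_coeff_diff[OF q(1)] using A
    by (auto intro!: eq_matI simp: algebra_simps)
  have Xg: "X * qexp_term q A w k = g (Suc k)" for k
  proof -
    have "X * qexp_term q A w k
          = (complex_of_real (1 - q) * w * (complex_of_real (1 / qfact q k) * w ^ k)) \<cdot>\<^sub>m (A * A ^\<^sub>m k)"
      unfolding X_def qexp_term_def using A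
      by (simp add: mult_smult_distrib[of _ N N _ N] mult_smult_assoc_mat[of _ N N _ N] smult_smult_mat mult.commute)
    then show ?thesis unfolding g_coeff qexp_coeff_Suc[OF q(1)] pow_mat_Suc_left[OF A] .
  qed
  have g0: "g 0 = 0\<^sub>m N N" unfolding g_def using A by (auto intro!: eq_matI simp: qexp_term_def)
  have "X * qexp_mat q A w = mat_suminf N N (\<lambda>k. g (Suc k))"
    unfolding qexp_mat_def dA mult_mat_suminf(2)[OF X terms sw] Xg ..
  also have "\<dots> = mat_suminf N N g"
    using mat_suminf_split_head[OF g sg] g0 by simp
  also have "\<dots> = qexp_mat q A w - qexp_mat q A (complex_of_real q * w)"
    unfolding qexp_mat_def dA g_def by (rule mat_suminf_diff[OF terms terms sw sqw, symmetric])
  finally have XE: "X * qexp_mat q A w = qexp_mat q A w - qexp_mat q A (complex_of_real q * w)" .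
  have "(1\<^sub>m N - X) * qexp_mat q A w = qexp_mat q A w - X * qexp_mat q A w"
    using minus_mult_distrib_mat[OF one_carrier_mat X qexp_mat_carrier[OF A, of q w]]
      left_mult_one_mat[OF qexp_mat_carrier[OF A, of q w]] by simp
  also have "\<dots> = qexp_mat q A (complex_of_real q * w)"
    unfolding XE using qexp_mat_carrier[OF A, of q w] qexp_mat_carrier[OF A, of q "complex_of_real q * w"]
    by (intro eq_matI) auto
  finally show ?thesis unfolding X_def .
qed

lemma qexp_mat_tail:
  assumes A: "A \<in> carrier_mat N N" and q: "0 \<le> q" and w: "norm w * mat_l1_norm A < 1"
  shows "qexp_mat q A w = 1\<^sub>m N + mat_suminf N N (\<lambda>k. qexp_term q A w (Suc k))"
    "mat_l1_norm (mat_suminf N N (\<lambda>k. qexp_term q A w (Suc k)))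
       \<le> real N * (norm w * mat_l1_norm A) / (1 - norm w * mat_l1_norm A)"
proof -
  have dA: "dim_row A = N" using A by simp
  show "qexp_mat q A w = 1\<^sub>m N + mat_suminf N N (\<lambda>k. qexp_term q A w (Suc k))"
    unfolding qexp_mat_def dA
    using mat_suminf_split_head[OF qexp_term_carrier[OF A] summable_qexp_term(2)[OF A q w]] qexp_term_0[OF A]
    by simp
  define t where "t = norm w * mat_l1_norm A"
  have t: "0 \<le> t" "t < 1" unfolding t_def using w by (auto intro: mult_nonneg_nonneg mat_l1_norm_nonneg)
  have s1: "summable (\<lambda>k. mat_l1_norm (qexp_term q A w (Suc k)))"
    using summable_qexp_term(1)[OF A q w] summable_Suc_iff[of "\<lambda>k. mat_l1_norm (qexp_term q A w k)"] by simp
  have sg: "summable (\<lambda>k. real N * t ^ Suc k)" using t by (intro summable_mult summable_geometric) auto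
  have "mat_l1_norm (mat_suminf N N (\<lambda>k. qexp_term q A w (Suc k))) \<le> (\<Sum>k. mat_l1_norm (qexp_term q A w (Suc k)))"
    by (rule mat_l1_norm_suminf_le[OF qexp_term_carrier[OF A] s1])
  also have "\<dots> \<le> (\<Sum>k. real N * t ^ Suc k)"
    by (rule suminf_le[OF _ s1 sg]) (use mat_l1_norm_qexp_term[OF A q, of w] in \<open>simp only: t_def\<close>)
  also have "\<dots> = real N * t * (\<Sum>k. t ^ k)"
    using suminf_mult[of "\<lambda>k. t ^ k" "real N * t"] t by (simp add: mult_ac)
  also have "\<dots> = real N * t / (1 - t)" using t by (simp add: suminf_geometric)
  finally show "mat_l1_norm (mat_suminf N N (\<lambda>k. qexp_term q A w (Suc k)))
                  \<le> real N * (norm w * mat_l1_norm A) / (1 - norm w * mat_l1_norm A)"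
    unfolding t_def .
qed

lemma sums_qexp_mat_sandwich:
  assumes A: "A \<in> carrier_mat N N" and C: "C \<in> carrier_mat n N" and B: "B \<in> carrier_mat N m"
    and q: "0 \<le> q" and z: "norm z * mat_l1_norm A < 1" and a: "a < n" and b: "b < m"
  shows "(\<lambda>k. (complex_of_real (1 / qfact q k) \<cdot>\<^sub>m (C * A ^\<^sub>m k * B)) $$ (a,b) * z ^ k)
           sums (C * qexp_mat q A z * B) $$ (a,b)"
proof -
  have dA: "dim_row A = N" using A by simp
  have terms: "\<And>k. qexp_term q A z k \<in> carrier_mat N N" by (rule qexp_term_carrier[OF A])
  have s: "mat_summable N N (qexp_term q A z)" by (rule summable_qexp_term(2)[OF A q z])
  have CE: "C * qexp_term q A z k \<in> carrier_mat n N" for k using C terms[of k] by simp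
  note sC = mult_mat_suminf[OF C terms s]
  note sCB = mat_suminf_mult[OF B CE sC(1)]
  have "(C * qexp_term q A z k * B) $$ (a,b)
          = (complex_of_real (1 / qfact q k) \<cdot>\<^sub>m (C * A ^\<^sub>m k * B)) $$ (a,b) * z ^ k" for k
  proof -
    have "C * qexp_term q A z k * B = (complex_of_real (1 / qfact q k) * z ^ k) \<cdot>\<^sub>m (C * A ^\<^sub>m k * B)"
      unfolding qexp_term_def using A B C
      by (simp add: mult_smult_distrib[of C n N _ N] mult_smult_assoc_mat[of _ n N B m])
    then show ?thesis using A B C a b by simp
  qed
  moreover have "(\<lambda>k. (C * qexp_term q A z k * B) $$ (a,b)) sums (C * qexp_mat q A z * B) $$ (a,b)"
    using sCB a b unfolding qexp_mat_def dA sC(2)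
    by (simp add: index_mat_suminf mat_summable_def summable_sums)
  ultimately show ?thesis by simp
qed

section \<open>The infinite product\<close>

text \<open>Once |D_J| < 1/2, the identity P_J = E - P_J D_J gives |P_J| \<le> 2 |E|,
  hence |P_J - E| = |P_J D_J| \<le> 2 |E| |D_J|.\<close>

lemma tendsto_index_mat_if_mult_one_plus:
  fixes P D :: "nat \<Rightarrow> complex mat"
  assumes P: "\<And>J. P J \<in> carrier_mat N N" and D: "\<And>J. D J \<in> carrier_mat N N"
    and E: "\<And>J. E = P J * (1\<^sub>m N + D J)"
    and D_0: "(\<lambda>J. mat_l1_norm (D J)) \<longlonglongrightarrow> 0"
    and pl: "p < N" "l < N"
  shows "(\<lambda>J. P J $$ (p,l)) \<longlonglongrightarrow> E $$ (p,l)"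
proof -
  have PD: "P J * D J \<in> carrier_mat N N" for J by (rule mult_carrier_mat[OF P D])
  have E_sum: "E = P J + P J * D J" for J
    using E[of J] mult_add_distrib_mat[OF P one_carrier_mat D] P[of J] by simp
  have Ec: "E \<in> carrier_mat N N" using E_sum[of 0] P PD by simp
  have P_diff: "P J = E + - (P J * D J)" for J
    using E_sum[of J] P[of J] PD[of J] by (auto intro!: eq_matI)
  have bound: "norm (P J $$ (p,l) - E $$ (p,l)) \<le> 2 * mat_l1_norm E * mat_l1_norm (D J)"
    if small: "mat_l1_norm (D J) < 1/2" for J
  proof -
    have mPD: "mat_l1_norm (P J * D J) \<le> mat_l1_norm (P J) * mat_l1_norm (D J)"
      by (rule mat_l1_norm_mult[OF P D])
    have "mat_l1_norm (E + - (P J * D J)) \<le> mat_l1_norm E + mat_l1_norm (- (P J * D J))"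
      by (rule mat_l1_norm_add[OF Ec uminus_carrier_mat[OF PD]])
    then have "mat_l1_norm (P J) \<le> mat_l1_norm E + mat_l1_norm (P J * D J)"
      by (simp only: P_diff[of J, symmetric] mat_l1_norm_uminus)
    also have "\<dots> \<le> mat_l1_norm E + mat_l1_norm (P J) * (1/2)"
      using mPD mult_left_mono[OF less_imp_le[OF small] mat_l1_norm_nonneg[of "P J"]] by linarith
    finally have mP: "mat_l1_norm (P J) \<le> 2 * mat_l1_norm E" by simp
    have "E $$ (p,l) = P J $$ (p,l) + (P J * D J) $$ (p,l)"
      using E_sum[of J] pl carrier_matD[OF PD[of J]] by simp
    then have "norm (P J $$ (p,l) - E $$ (p,l)) = norm ((P J * D J) $$ (p,l))"
      by simp
    also have "\<dots> \<le> mat_l1_norm (P J * D J)" by (rule norm_index_le_mat_l1_norm) (use pl P[of J] D[of J] in auto)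
    also have "\<dots> \<le> 2 * mat_l1_norm E * mat_l1_norm (D J)"
      using mPD mult_right_mono[OF mP mat_l1_norm_nonneg[of "D J"]] by linarith
    finally show ?thesis .
  qed
  have small: "eventually (\<lambda>J. mat_l1_norm (D J) < 1/2) sequentially"
    by (rule order_tendstoD(2)[OF D_0]) simp
  have "((\<lambda>J. P J $$ (p,l) - E $$ (p,l)) \<longlongrightarrow> 0) sequentially"
    by (rule Lim_null_comparison[OF _ tendsto_mult_right_zero[OF D_0]], rule eventually_mono[OF small])
       (rule bound)
  then show ?thesis by (rule LIM_zero_cancel)
qed

lemma qprod_part_mult_qexp_mat:
  assumes A: "A \<in> carrier_mat N N" and q: "0 \<le> q" "q < 1" and z: "norm z * mat_l1_norm A < 1"
    and inv: "\<And>j. invertible_mat (1\<^sub>m N - (complex_of_real ((1 - q) * q ^ j) * z) \<cdot>\<^sub>m A)"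
  shows "qprod_part q A z J \<in> carrier_mat N N"
    "qexp_mat q A z = qprod_part q A z J * qexp_mat q A (complex_of_real (q ^ J) * z)"
proof -
  have dA: "dim_row A = N" using A by simp
  define M where "M j = 1\<^sub>m N - (complex_of_real ((1 - q) * q ^ j) * z) \<cdot>\<^sub>m A" for j
  define w where "w j = complex_of_real (q ^ j) * z" for j
  have M: "M j \<in> carrier_mat N N" for j unfolding M_def using A by (intro minus_carrier_mat smult_carrier_mat)
  have Minv: "minv (M j) \<in> carrier_mat N N" "minv (M j) * M j = 1\<^sub>m N" for j
    using minv_inverse[OF inv[folded M_def] M] by auto
  have E: "qexp_mat q A u \<in> carrier_mat N N" for u by (rule qexp_mat_carrier[OF A])
  have P_Suc: "qprod_part q A z (Suc J) = qprod_part q A z J * minv (M J)" for J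
    by (simp add: M_def dA)
  show P: "qprod_part q A z J \<in> carrier_mat N N" for J
  proof (induction J)
    case (Suc J) then show ?case unfolding P_Suc using Minv(1) by simp
  qed (simp add: dA)
  have "norm (w j) * mat_l1_norm A \<le> norm z * mat_l1_norm A" for j
    unfolding w_def using q by (intro mult_right_mono norm_q_mult_le mat_l1_norm_nonneg) (auto simp: power_le_one)
  then have "norm (w j) * mat_l1_norm A < 1" for j using z by (meson le_less_trans)
  then have ME: "M j * qexp_mat q A (w j) = qexp_mat q A (w (Suc j))" for j
  proof -
    have "M j = 1\<^sub>m N - (complex_of_real (1 - q) * w j) \<cdot>\<^sub>m A"
      unfolding M_def w_def by (simp add: mult.assoc)
    moreover have "w (Suc j) = complex_of_real q * w j"
      unfolding w_def by (simp add: mult.assoc)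
    ultimately show ?thesis using qexp_mat_functional_eq[OF A q \<open>norm (w j) * mat_l1_norm A < 1\<close>]
      by simp
  qed
  show "qexp_mat q A z = qprod_part q A z J * qexp_mat q A (w J)" for J
  proof (induction J)
    case 0 then show ?case using E[of z] by (simp add: dA w_def)
  next
    case (Suc J)
    let ?P = "qprod_part q A z J" and ?Mi = "minv (M J)" and ?E = "qexp_mat q A (w J)"
    have "?P * ?E = ?P * ((?Mi * M J) * ?E)"
      using Minv(2) left_mult_one_mat[OF E[of "w J"]] by simp
    also have "\<dots> = (?P * ?Mi) * (M J * ?E)"
      using assoc_mult_mat[OF Minv(1) M E] assoc_mult_mat[OF P Minv(1) mult_carrier_mat[OF M E]] by simp
    also have "\<dots> = qprod_part q A z (Suc J) * qexp_mat q A (w (Suc J))"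
      unfolding P_Suc ME ..
    finally show ?case using Suc by simp
  qed
qed

lemma qprod_part_tendsto_qexp_mat:
  assumes A: "A \<in> carrier_mat N N" and q: "0 \<le> q" "q < 1" and z: "norm z * mat_l1_norm A < 1"
    and inv: "\<And>j. invertible_mat (1\<^sub>m N - (complex_of_real ((1 - q) * q ^ j) * z) \<cdot>\<^sub>m A)"
    and pl: "p < N" "l < N"
  shows "(\<lambda>J. qprod_part q A z J $$ (p,l)) \<longlonglongrightarrow> qexp_mat q A z $$ (p,l)"
proof -
  define w where "w J = complex_of_real (q ^ J) * z" for J
  define D where "D J = mat_suminf N N (\<lambda>k. qexp_term q A (w J) (Suc k))" for J
  define t where "t = norm z * mat_l1_norm A"
  have t: "0 \<le> t" "t < 1" unfolding t_def using z by (auto intro: mult_nonneg_nonneg mat_l1_norm_nonneg)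
  have tw: "norm (w J) * mat_l1_norm A = q ^ J * t" for J
    using q by (simp add: w_def t_def norm_mult norm_power)
  have wA: "norm (w J) * mat_l1_norm A < 1" for J
  proof -
    have "q ^ J * t \<le> t" using t q by (simp add: mult_left_le_one_le power_le_one)
    then show ?thesis unfolding tw using t by linarith
  qed
  have D_bound: "mat_l1_norm (D J) \<le> real N * t / (1 - t) * q ^ J" for J
  proof -
    have "mat_l1_norm (D J) \<le> real N * (q ^ J * t) / (1 - q ^ J * t)"
      using qexp_mat_tail(2)[OF A q(1) wA] unfolding D_def tw .
    also have "\<dots> \<le> real N * (q ^ J * t) / (1 - t)"
    proof -
      have "q ^ J * t \<le> t" using t q by (simp add: mult_left_le_one_le power_le_one)
      then show ?thesis using t q by (intro divide_left_mono) (auto intro!: mult_pos_pos)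
    qed
    finally show ?thesis by (simp add: mult_ac)
  qed
  have bound_0: "(\<lambda>J. real N * t / (1 - t) * q ^ J) \<longlonglongrightarrow> 0"
    using q by (intro tendsto_mult_right_zero LIMSEQ_power_zero) auto
  have D_0: "(\<lambda>J. mat_l1_norm (D J)) \<longlonglongrightarrow> 0"
    by (rule Lim_null_comparison[OF always_eventually bound_0]) (use D_bound mat_l1_norm_nonneg in simp)
  have E: "qexp_mat q A z = qprod_part q A z J * (1\<^sub>m N + D J)" for J
    using qprod_part_mult_qexp_mat(2)[OF A q z inv, of J] qexp_mat_tail(1)[OF A q(1) wA, of J]
    by (simp add: D_def w_def)
  have D: "D J \<in> carrier_mat N N" for J by (simp add: D_def)
  show ?thesis
    by (rule tendsto_index_mat_if_mult_one_plus[OF qprod_part_mult_qexp_mat(1)[OF A q z inv] D E D_0 pl])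
qed

definition qprod_realization ::
    "real \<Rightarrow> nat \<Rightarrow> nat \<Rightarrow> nat \<Rightarrow> (nat \<Rightarrow> complex mat) \<Rightarrow> complex mat \<Rightarrow> complex mat \<Rightarrow> complex mat \<Rightarrow> bool" where
  "qprod_realization q n m N T C A B \<longleftrightarrow>
     (\<exists>\<epsilon>>0. \<forall>z. norm z < \<epsilon> \<longrightarrow>
        (\<forall>j. invertible_mat (1\<^sub>m N - (complex_of_real ((1 - q) * q ^ j) * z) \<cdot>\<^sub>m A)) \<and>
        (\<exists>P. P \<in> carrier_mat N N \<and>
             (\<forall>a<N. \<forall>b<N. (\<lambda>J. qprod_part q A z J $$ (a,b)) \<longlonglongrightarrow> P $$ (a,b)) \<and>
             Tser n m T z = C * P * B))"

lemma norm_mult_mat_l1_norm_less_1: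
  assumes "norm z < 1 / (mat_l1_norm A + 1)" shows "norm z * mat_l1_norm A < 1"
proof -
  have p: "0 < mat_l1_norm A + 1" using mat_l1_norm_nonneg[of A] by simp
  have "norm z * (mat_l1_norm A + 1) < 1" using assms p by (simp add: less_divide_eq)
  moreover have "norm z * mat_l1_norm A \<le> norm z * (mat_l1_norm A + 1)" by (intro mult_left_mono) auto
  ultimately show ?thesis by simp
qed

lemma invertible_qprod_factor:
  assumes A: "A \<in> carrier_mat N N" and q: "0 \<le> q" "q < 1" and z: "norm z * mat_l1_norm A < 1"
  shows "invertible_mat (1\<^sub>m N - (complex_of_real ((1 - q) * q ^ j) * z) \<cdot>\<^sub>m A)"
proof (rule invertible_one_minus_mat)
  show "(complex_of_real ((1 - q) * q ^ j) * z) \<cdot>\<^sub>m A \<in> carrier_mat N N" using A by simp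
  have "norm (complex_of_real ((1 - q) * q ^ j) * z) \<le> norm z"
    using q by (intro norm_q_mult_le) (auto simp: power_le_one mult_le_one)
  then have "norm (complex_of_real ((1 - q) * q ^ j) * z) * mat_l1_norm A \<le> norm z * mat_l1_norm A"
    by (intro mult_right_mono mat_l1_norm_nonneg)
  then show "mat_l1_norm ((complex_of_real ((1 - q) * q ^ j) * z) \<cdot>\<^sub>m A) < 1"
    using z by (simp add: mat_l1_norm_smult)
qed

lemma Tser_eq_qexp_mat_sandwich:
  assumes q: "0 \<le> q" and C: "C \<in> carrier_mat n N" and A: "A \<in> carrier_mat N N" and B: "B \<in> carrier_mat N m"
    and T: "\<And>k. T k = complex_of_real (1 / qfact q k) \<cdot>\<^sub>m (C * A ^\<^sub>m k * B)"
    and z: "norm z * mat_l1_norm A < 1"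
  shows "Tser n m T z = C * qexp_mat q A z * B"
  using sums_unique[OF sums_qexp_mat_sandwich[OF A C B q z]] C B
  by (auto simp: Tser_def T intro!: eq_matI)

lemma qprod_realization_if_moments:
  assumes q: "0 \<le> q" "q < 1"
    and C: "C \<in> carrier_mat n N" and A: "A \<in> carrier_mat N N" and B: "B \<in> carrier_mat N m"
    and T: "\<And>k. T k = complex_of_real (1 / qfact q k) \<cdot>\<^sub>m (C * A ^\<^sub>m k * B)"
  shows "qprod_realization q n m N T C A B"
  unfolding qprod_realization_def
proof (intro exI[of _ "1 / (mat_l1_norm A + 1)"] conjI allI impI)
  show "0 < 1 / (mat_l1_norm A + 1)" using mat_l1_norm_nonneg[of A] by simp
  fix z :: complex assume "norm z < 1 / (mat_l1_norm A + 1)"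
  then have z: "norm z * mat_l1_norm A < 1" by (rule norm_mult_mat_l1_norm_less_1)
  show inv: "invertible_mat (1\<^sub>m N - (complex_of_real ((1 - q) * q ^ j) * z) \<cdot>\<^sub>m A)" for j
    by (rule invertible_qprod_factor[OF A q z])
  show "\<exists>P. P \<in> carrier_mat N N \<and>
          (\<forall>a<N. \<forall>b<N. (\<lambda>J. qprod_part q A z J $$ (a,b)) \<longlonglongrightarrow> P $$ (a,b)) \<and>
          Tser n m T z = C * P * B"
  proof (intro exI[of _ "qexp_mat q A z"] conjI allI impI)
    show "qexp_mat q A z \<in> carrier_mat N N" by (rule qexp_mat_carrier[OF A])
    show "(\<lambda>J. qprod_part q A z J $$ (a,b)) \<longlonglongrightarrow> qexp_mat q A z $$ (a,b)" if "a < N" "b < N" for a b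
      by (rule qprod_part_tendsto_qexp_mat[OF A q z inv that])
    show "Tser n m T z = C * qexp_mat q A z * B" by (rule Tser_eq_qexp_mat_sandwich[OF q(1) C A B T z])
  qed
qed

lemma Tser_eq_qexp_mat_sandwich_if_qprod_realization:
  assumes q: "0 \<le> q" "q < 1" and A: "A \<in> carrier_mat N N"
    and realization: "qprod_realization q n m N T C A B"
  shows "\<exists>\<epsilon>>0. \<forall>z. norm z < \<epsilon> \<longrightarrow> norm z * mat_l1_norm A < 1 \<and> Tser n m T z = C * qexp_mat q A z * B"
proof -
  obtain \<epsilon> where \<epsilon>: "\<epsilon> > 0" and H: "\<And>z. norm z < \<epsilon> \<Longrightarrow>
                 (\<forall>j. invertible_mat (1\<^sub>m N - (complex_of_real ((1 - q) * q ^ j) * z) \<cdot>\<^sub>m A)) \<and>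
                 (\<exists>P. P \<in> carrier_mat N N \<and>
                      (\<forall>a<N. \<forall>b<N. (\<lambda>J. qprod_part q A z J $$ (a,b)) \<longlonglongrightarrow> P $$ (a,b)) \<and>
                      Tser n m T z = C * P * B)"
    using realization unfolding qprod_realization_def by blast
  define s where "s = min \<epsilon> (1 / (mat_l1_norm A + 1))"
  have "Tser n m T z = C * qexp_mat q A z * B" if zs: "norm z < s" and z: "norm z * mat_l1_norm A < 1" for z
  proof -
    have "norm z < \<epsilon>" using zs unfolding s_def by simp
    then obtain P where P: "P \<in> carrier_mat N N"
      and lim: "\<forall>a<N. \<forall>b<N. (\<lambda>J. qprod_part q A z J $$ (a,b)) \<longlonglongrightarrow> P $$ (a,b)"
      and TP: "Tser n m T z = C * P * B"
      and inv: "\<And>j. invertible_mat (1\<^sub>m N - (complex_of_real ((1 - q) * q ^ j) * z) \<cdot>\<^sub>m A)"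
      using H by blast
    have "P = qexp_mat q A z"
    proof (rule eq_matI)
      fix a b assume "a < dim_row (qexp_mat q A z)" "b < dim_col (qexp_mat q A z)"
      then have ab: "a < N" "b < N" using qexp_mat_carrier[OF A, of q z] by auto
      show "P $$ (a,b) = qexp_mat q A z $$ (a,b)"
        using LIMSEQ_unique lim ab qprod_part_tendsto_qexp_mat[OF A q z inv ab] by blast
    qed (use P qexp_mat_carrier[OF A, of q z] in auto)
    then show ?thesis using TP by simp
  qed
  moreover have "norm z * mat_l1_norm A < 1" if "norm z < s" for z
    by (rule norm_mult_mat_l1_norm_less_1) (use that in \<open>simp add: s_def\<close>)
  moreover have "s > 0" unfolding s_def using \<epsilon> mat_l1_norm_nonneg[of A] by simp
  ultimately show ?thesis by blast
qed

lemma moments_if_Tser_eq_qexp_mat_sandwich: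
  assumes q: "0 \<le> q" and dims: "\<And>k. T k \<in> carrier_mat n m"
    and C: "C \<in> carrier_mat n N" and A: "A \<in> carrier_mat N N" and B: "B \<in> carrier_mat N m"
    and s: "s > 0"
    and conv: "\<And>z a b. norm z < s \<Longrightarrow> a < n \<Longrightarrow> b < m \<Longrightarrow> summable (\<lambda>k. T k $$ (a,b) * z ^ k)"
    and small: "\<And>z :: complex. norm z < s \<Longrightarrow> norm z * mat_l1_norm A < 1"
    and Tser: "\<And>z. norm z < s \<Longrightarrow> Tser n m T z = C * qexp_mat q A z * B"
  shows "T k = complex_of_real (1 / qfact q k) \<cdot>\<^sub>m (C * A ^\<^sub>m k * B)"
proof (rule eq_matI)
  fix a b assume "a < dim_row (complex_of_real (1 / qfact q k) \<cdot>\<^sub>m (C * A ^\<^sub>m k * B))"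
    "b < dim_col (complex_of_real (1 / qfact q k) \<cdot>\<^sub>m (C * A ^\<^sub>m k * B))"
  then have a: "a < n" and b: "b < m" using C B by auto
  define d where "d i = T i $$ (a,b) - (complex_of_real (1 / qfact q i) \<cdot>\<^sub>m (C * A ^\<^sub>m i * B)) $$ (a,b)" for i
  have "(\<lambda>i. d i * z ^ i) sums 0" if zs: "norm z < s" for z
  proof -
    have "(\<lambda>i. T i $$ (a,b) * z ^ i) sums Tser n m T z $$ (a,b)"
      using conv[OF zs a b] a b by (simp add: Tser_def summable_sums)
    then have "(\<lambda>i. T i $$ (a,b) * z ^ i) sums (C * qexp_mat q A z * B) $$ (a,b)"
      unfolding Tser[OF zs] .
    from sums_diff[OF this sums_qexp_mat_sandwich[OF A C B q small[OF zs] a b]] show ?thesis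
      by (simp add: d_def left_diff_distrib)
  qed
  then have "d k = 0" by (intro powser_coeffs_zero[OF s])
  then show "T k $$ (a,b) = (complex_of_real (1 / qfact q k) \<cdot>\<^sub>m (C * A ^\<^sub>m k * B)) $$ (a,b)"
    unfolding d_def by simp
qed (use dims[of k] C B in auto)

lemma moments_if_qprod_realization:
  assumes q: "0 \<le> q" "q < 1" and dims: "\<And>k. T k \<in> carrier_mat n m" and r: "r > 0"
    and conv: "\<And>z i j. z \<in> ball 0 r \<Longrightarrow> i < n \<Longrightarrow> j < m \<Longrightarrow>
                 summable (\<lambda>k. T k $$ (i,j) * z ^ k)"
    and C: "C \<in> carrier_mat n N" and A: "A \<in> carrier_mat N N" and B: "B \<in> carrier_mat N m"
    and realization: "qprod_realization q n m N T C A B"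
  shows "T k = complex_of_real (1 / qfact q k) \<cdot>\<^sub>m (C * A ^\<^sub>m k * B)"
proof -
  obtain \<epsilon> where \<epsilon>: "\<epsilon> > 0"
    and near_0: "\<And>z. norm z < \<epsilon> \<Longrightarrow> norm z * mat_l1_norm A < 1 \<and> Tser n m T z = C * qexp_mat q A z * B"
    using Tser_eq_qexp_mat_sandwich_if_qprod_realization[OF q A realization] by blast
  show ?thesis
  proof (rule moments_if_Tser_eq_qexp_mat_sandwich[OF q(1) dims C A B, of "min \<epsilon> r"])
    show "0 < min \<epsilon> r" using \<epsilon> r by simp
  qed (use near_0 conv in auto)
qed

lemma qprod_realization_iff_moments:
  assumes q: "0 \<le> q" "q < 1" and dims: "\<And>k. T k \<in> carrier_mat n m" and r: "r > 0"
    and conv: "\<And>z i j. z \<in> ball 0 r \<Longrightarrow> i < n \<Longrightarrow> j < m \<Longrightarrow>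
                 summable (\<lambda>k. T k $$ (i,j) * z ^ k)"
  shows "(C \<in> carrier_mat n N \<and> A \<in> carrier_mat N N \<and> B \<in> carrier_mat N m \<and>
            qprod_realization q n m N T C A B) \<longleftrightarrow>
         (C \<in> carrier_mat n N \<and> A \<in> carrier_mat N N \<and> B \<in> carrier_mat N m \<and>
            (\<forall>k. T k = complex_of_real (1 / qfact q k) \<cdot>\<^sub>m (C * A ^\<^sub>m k * B)))"
proof -
  have "T k = complex_of_real (1 / qfact q k) \<cdot>\<^sub>m (C * A ^\<^sub>m k * B)"
    if "C \<in> carrier_mat n N" "A \<in> carrier_mat N N" "B \<in> carrier_mat N m"
      "qprod_realization q n m N T C A B" for k
    by (rule moments_if_qprod_realization[OF q dims r conv that])
  moreover have "qprod_realization q n m N T C A B"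
    if "C \<in> carrier_mat n N" "A \<in> carrier_mat N N" "B \<in> carrier_mat N m"
      "\<forall>k. T k = complex_of_real (1 / qfact q k) \<cdot>\<^sub>m (C * A ^\<^sub>m k * B)"
    by (rule qprod_realization_if_moments[OF q that(1-3) that(4)[rule_format]])
  ultimately show ?thesis by (intro iffI) auto
qed

theorem theorem5p8:
  fixes q r :: real and n m :: nat and T :: "nat \<Rightarrow> complex mat"
  assumes q: "0 \<le> q" "q < 1"
    and dims: "\<And>k. T k \<in> carrier_mat n m"
    and r: "r > 0"
    and conv: "\<And>z i j. z \<in> ball 0 r \<Longrightarrow> i < n \<Longrightarrow> j < m \<Longrightarrow>
                 summable (\<lambda>k. T k $$ (i,j) * z ^ k)"
  defines "P1 \<equiv> (\<exists>N C A B. C \<in> carrier_mat n N \<and> A \<in> carrier_mat N N \<and> B \<in> carrier_mat N m \<and>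
              (\<exists>\<epsilon>>0. \<forall>z. norm z < \<epsilon> \<longrightarrow>
                 (\<forall>j. invertible_mat (1\<^sub>m N - (complex_of_real ((1 - q) * q ^ j) * z) \<cdot>\<^sub>m A)) \<and>
                 (\<exists>P. P \<in> carrier_mat N N \<and>
                      (\<forall>a<N. \<forall>b<N. (\<lambda>J. qprod_part q A z J $$ (a,b)) \<longlonglongrightarrow> P $$ (a,b)) \<and>
                      Tser n m T z = C * P * B)))"
    and "P2 \<equiv> fin_dim_span
              ((\<lambda>(j,b). (\<lambda>(i,a). if a < n then complex_of_real (qfact q (i+j)) * T (i+j) $$ (a,b) else 0))
                 ` (UNIV \<times> {..<m}))"
    and "P3 \<equiv> (\<exists>N C A B. C \<in> carrier_mat n N \<and> A \<in> carrier_mat N N \<and> B \<in> carrier_mat N m \<and>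
              (\<forall>k. T k = complex_of_real (1 / qfact q k) \<cdot>\<^sub>m (C * A ^\<^sub>m k * B)))"
    and "P4 \<equiv> fin_dim_span
              ((\<lambda>(k,b). (\<lambda>(z,a). if z \<in> ball 0 r \<and> a < n
                                    then ((RqM q n m ^^ k) (Tser n m T)) z $$ (a,b) else 0))
                 ` (UNIV \<times> {..<m}))"
  shows "(P1 \<longleftrightarrow> P2) \<and> (P2 \<longleftrightarrow> P3) \<and> (P3 \<longleftrightarrow> P4)"
proof -
  have P1: "P1 \<longleftrightarrow> (\<exists>N C A B. C \<in> carrier_mat n N \<and> A \<in> carrier_mat N N \<and> B \<in> carrier_mat N m \<and>
                                qprod_realization q n m N T C A B)"
    unfolding P1_def qprod_realization_def ..
  have P2: "P2 \<longleftrightarrow> fin_dim_span (hankel_col q n T ` (UNIV \<times> {..<m}))"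
    unfolding P2_def hankel_col_def ..
  have P4: "P4 \<longleftrightarrow> fin_dim_span (Rq_col q r n T ` (UNIV \<times> {..<m}))"
    using image_RqM_iterate_cols_eq[OF q r conv] unfolding P4_def by simp
  have "P1 \<longleftrightarrow> P3"
    unfolding P1 P3_def using qprod_realization_iff_moments[OF q dims r conv] by blast
  moreover have "P2 \<longleftrightarrow> P3"
    unfolding P2 P3_def by (rule fin_dim_hankel_iff_moments[OF q(1) dims])
  moreover have "P2 \<longleftrightarrow> P4"
    unfolding P2 P4 by (rule fin_dim_hankel_iff_fin_dim_Rq_cols[OF q r conv])
  ultimately show ?thesis by blast
qed

end
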